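(* Let $T$ be a triangulation of the oriented 2-sphere (a simplicial complex) with $N+3$ vertices and $3N+3$ edges, and let $\mathcal E_0\subset\mathcal E(T)$ be a set of $2N$ edges whose complement is a cycle-rooted spanning tree of $T$ with a cycle of odd length. Then the $2N\times 2N$ matrix $E_0=(E_{e,e'})_{e,e'\in\mathcal E_0}$ (rows and columns in the same order) satisfies $\det E_0=1$.
   Context: $E_{e,e'}$: if $e\neq e'$ lie in a common face whose edges in positive cyclic order are $\{a,b\},\{b,c\},\{c,a\}$, then $E_{e,e'}=-1$ if $e'$ immediately follows $e$ and $+1$ if $e'$ immediately precedes $e$; otherwise $E_{e,e'}=0$. A cycle-rooted spanning tree is a connected spanning subgraph with as many edges as vertices. *)

theory Defs
  imports "Jordan_Normal_Form.Determinant"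
begin

text \<open>An oriented triangulated surface is given by a finite vertex set V and a set F of
  oriented triangles (a,b,c), meaning the face {a,b,c} with positive cyclic order
  a -> b -> c.\<close>

definition tri_edges :: "('a \<times> 'a \<times> 'a) set \<Rightarrow> 'a set set" where
  "tri_edges F = {{a, b} | a b c. (a, b, c) \<in> F}"

definition oriented_sphere_triangulation ::
  "'a set \<Rightarrow> ('a \<times> 'a \<times> 'a) set \<Rightarrow> bool" where
  "oriented_sphere_triangulation V F \<longleftrightarrow>
     finite V \<and> V \<noteq> {} \<and> F \<subseteq> V \<times> V \<times> V
     \<comment> \<open>faces are genuine triangles, listed with all cyclic rotations\<close>
     \<and> (\<forall>a b c. (a, b, c) \<in> F \<longrightarrow> a \<noteq> b \<and> b \<noteq> c \<and> a \<noteq> c \<and> (b, c, a) \<in> F)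
     \<comment> \<open>simplicial complex: a 3-set carries at most one (oriented) face\<close>
     \<and> (\<forall>a b c. (a, b, c) \<in> F \<longrightarrow> (a, c, b) \<notin> F)
     \<comment> \<open>every vertex lies in a face (pure 2-dimensional complex)\<close>
     \<and> (\<forall>v\<in>V. \<exists>b c. (v, b, c) \<in> F)
     \<comment> \<open>closed and consistently oriented: every directed edge of an edge lies in
         exactly one positively oriented face (so each edge lies in exactly two faces,
         inducing opposite orientations)\<close>
     \<and> (\<forall>a b. {a, b} \<in> tri_edges F \<longrightarrow> (\<exists>!c. (a, b, c) \<in> F))
     \<comment> \<open>manifold condition: the link of every vertex is a single cycle\<close>
     \<and> (\<forall>v\<in>V. \<forall>a b. {v, a} \<in> tri_edges F \<longrightarrow> {v, b} \<in> tri_edges F \<longrightarrow>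
           (a, b) \<in> ({(x, y). (v, x, y) \<in> F})\<^sup>*)
     \<comment> \<open>connected\<close>
     \<and> (\<forall>u\<in>V. \<forall>w\<in>V. (u, w) \<in> ({(x, y). {x, y} \<in> tri_edges F})\<^sup>*)
     \<comment> \<open>Euler characteristic 2 (V - E + F = 2; F counted as unoriented faces)\<close>
     \<and> int (card V) - int (card (tri_edges F)) + int (card F div 3) = 2"

definition Eentry :: "('a \<times> 'a \<times> 'a) set \<Rightarrow> 'a set \<Rightarrow> 'a set \<Rightarrow> int" where
  "Eentry F e e' =
    (if \<exists>a b c. (a, b, c) \<in> F \<and> e = {a, b} \<and> e' = {b, c} then -1
     else if \<exists>a b c. (a, b, c) \<in> F \<and> e = {b, c} \<and> e' = {a, b} then 1
     else 0)"

definition is_cycle :: "'a set set \<Rightarrow> 'a list \<Rightarrow> bool" where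
  "is_cycle H vs \<longleftrightarrow> length vs \<ge> 3 \<and> distinct vs \<and>
     (\<forall>i < length vs. {vs ! i, vs ! ((i + 1) mod length vs)} \<in> H)"

definition spanning_connected :: "'a set \<Rightarrow> 'a set set \<Rightarrow> bool" where
  "spanning_connected V H \<longleftrightarrow>
     (\<forall>u\<in>V. \<forall>w\<in>V. (u, w) \<in> ({(x, y). {x, y} \<in> H})\<^sup>*)"

definition cycle_rooted_spanning_tree :: "'a set \<Rightarrow> 'a set set \<Rightarrow> 'a set set \<Rightarrow> bool" where
  "cycle_rooted_spanning_tree V EG H \<longleftrightarrow>
     H \<subseteq> EG \<and> spanning_connected V H \<and> card H = card V"

end

theory Submission
  imports Defs "Jordan_Normal_Form.Char_Poly"
begin

text \<open>Since E is skew-symmetric, det E0 \<ge> 0, so it suffices to show that no prime p divides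
  det E0, i.e. that E0 has trivial kernel modulo p. Extend a vector X on E0 by zero to all edges
  and suppose EX \<equiv> 0 on E0. The indicator of the star of a vertex lies in the kernel of the skew
  matrix E, so the sums of EX over stars vanish; these are the equations of the incidence matrix
  of the cycle-rooted spanning tree, which modulo an odd prime is invertible because the cycle is
  odd, and modulo 2 forces the odd set of EX to be an even subgraph of the tree of even size, hence
  empty. Thus EX \<equiv> 0 on all edges. For odd p this makes 2X{a,b} \<equiv> \<psi> a + \<psi> b for a vertex
  potential \<psi>; as X vanishes on the tree, \<psi> a + \<psi> b \<equiv> 0 along its edges, which forces \<psi> \<equiv> 0
  because the cycle is odd, and then X \<equiv> 0. For p = 2 one uses instead that the mod-2 first
  cohomology of the sphere is trivial.\<close>

section \<open>Integer matrices modulo a prime\<close>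

lemma det_mod_eq:
  fixes A B :: "int mat"
  assumes A: "A \<in> carrier_mat n n" and B: "B \<in> carrier_mat n n"
    and entries: "\<And>i j. i < n \<Longrightarrow> j < n \<Longrightarrow> A $$ (i, j) mod p = B $$ (i, j) mod p"
  shows "det A mod p = det B mod p"
proof -
  have prod: "(\<Prod>i=0..<n. A $$ (i, \<sigma> i)) mod p = (\<Prod>i=0..<n. B $$ (i, \<sigma> i)) mod p"
    if "\<sigma> permutes {0..<n}" for \<sigma>
  proof -
    have "(\<Prod>i=0..<n. A $$ (i, \<sigma> i)) mod p = (\<Prod>i=0..<n. A $$ (i, \<sigma> i) mod p) mod p"
      by (simp add: mod_prod_eq)
    also have "(\<Prod>i=0..<n. A $$ (i, \<sigma> i) mod p) = (\<Prod>i=0..<n. B $$ (i, \<sigma> i) mod p)"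
      using entries permutes_in_image[OF that] by (intro prod.cong refl) simp
    also have "(\<Prod>i=0..<n. B $$ (i, \<sigma> i) mod p) mod p = (\<Prod>i=0..<n. B $$ (i, \<sigma> i)) mod p"
      by (simp add: mod_prod_eq)
    finally show ?thesis .
  qed
  have "det A mod p = (\<Sum>\<sigma> | \<sigma> permutes {0..<n}. (signof \<sigma> * (\<Prod>i=0..<n. A $$ (i, \<sigma> i))) mod p) mod p"
    by (simp add: det_def'[OF A] mod_sum_eq)
  also have "\<dots> = (\<Sum>\<sigma> | \<sigma> permutes {0..<n}. (signof \<sigma> * (\<Prod>i=0..<n. B $$ (i, \<sigma> i))) mod p) mod p"
  proof (rule arg_cong[where f="\<lambda>x. x mod p"], rule sum.cong)
    fix \<sigma> assume "\<sigma> \<in> {\<sigma>. \<sigma> permutes {0..<n}}"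
    then have "(\<Prod>i=0..<n. A $$ (i, \<sigma> i)) mod p = (\<Prod>i=0..<n. B $$ (i, \<sigma> i)) mod p"
      using prod by simp
    then show "(signof \<sigma> * (\<Prod>i=0..<n. A $$ (i, \<sigma> i))) mod p
        = (signof \<sigma> * (\<Prod>i=0..<n. B $$ (i, \<sigma> i))) mod p"
      by (metis mod_mult_right_eq)
  qed simp
  also have "\<dots> = det B mod p"
    by (simp add: det_def'[OF B] mod_sum_eq)
  finally show ?thesis .
qed

definition kernel_trivial_mod :: "int \<Rightarrow> nat \<Rightarrow> (nat \<Rightarrow> nat \<Rightarrow> int) \<Rightarrow> bool" where
  "kernel_trivial_mod p n a \<longleftrightarrow>
     (\<forall>x. (\<forall>i<n. p dvd (\<Sum>j<n. a i j * x j)) \<longrightarrow> (\<forall>j<n. p dvd x j))"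

text \<open>Reduction modulo p maps the finite set of residue vectors injectively, hence surjectively,
  to itself; preimages of the unit vectors form the columns of an inverse.\<close>

lemma kernel_trivial_mod_right_inverse:
  fixes p :: int
  assumes p: "p > 1" and ker: "kernel_trivial_mod p n a"
  obtains X where "\<And>i k. i < n \<Longrightarrow> k < n \<Longrightarrow>
    (\<Sum>j<n. a i j * X k j) mod p = (if i = k then 1 else 0)"
proof -
  define D where "D = {x :: nat \<Rightarrow> int. \<forall>i. (i \<in> {..<n} \<longrightarrow> x i \<in> {0..<p}) \<and> (i \<notin> {..<n} \<longrightarrow> x i = 0)}"
  define g where "g x = (\<lambda>i. if i < n then (\<Sum>j<n. a i j * x j) mod p else 0)" for x :: "nat \<Rightarrow> int"
  have "finite D"
    unfolding D_def by (intro finite_set_of_finite_funs) auto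
  moreover have "g ` D \<subseteq> D"
    using p unfolding D_def g_def by auto
  moreover have "inj_on g D"
  proof
    fix x y assume x: "x \<in> D" and y: "y \<in> D" and gxy: "g x = g y"
    have "p dvd (\<Sum>j<n. a i j * (x j - y j))" if "i < n" for i
    proof -
      have "(\<Sum>j<n. a i j * x j) mod p = (\<Sum>j<n. a i j * y j) mod p"
        using fun_cong[OF gxy, of i] that unfolding g_def by simp
      then have "p dvd (\<Sum>j<n. a i j * x j) - (\<Sum>j<n. a i j * y j)"
        by (simp add: mod_eq_dvd_iff)
      then show ?thesis
        by (simp add: sum_subtractf right_diff_distrib)
    qed
    then have dvd: "p dvd x j - y j" if "j < n" for j
      using ker[unfolded kernel_trivial_mod_def, rule_format, of "\<lambda>j. x j - y j"] that by blast
    show "x = y"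
    proof
      fix j
      show "x j = y j"
      proof (cases "j < n")
        case True
        then have "x j mod p = y j mod p"
          using dvd by (simp add: mod_eq_dvd_iff)
        then show ?thesis
          using x y True unfolding D_def by simp
      qed (use x y in \<open>simp add: D_def\<close>)
    qed
  qed
  ultimately have surj: "g ` D = D"
    by (rule endo_inj_surj)
  have "\<exists>x \<in> D. g x = (\<lambda>i. if i = k then 1 else 0)" if "k < n" for k
  proof -
    have "(\<lambda>i. if i = k then 1 else 0) \<in> D"
      using p that unfolding D_def by auto
    then have "(\<lambda>i. if i = k then 1 else 0) \<in> g ` D"
      using surj by simp
    then show ?thesis
      by (auto simp: image_iff)
  qed
  then obtain X where X: "\<And>k. k < n \<Longrightarrow> g (X k) = (\<lambda>i. if i = k then 1 else 0)"
    by metis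
  show thesis
  proof (rule that)
    fix i k assume ik: "i < n" "k < n"
    have "(if i < n then (\<Sum>j<n. a i j * X k j) mod p else 0) = (if i = k then 1 else 0)"
      using X[OF ik(2)] unfolding g_def by (rule fun_cong)
    then show "(\<Sum>j<n. a i j * X k j) mod p = (if i = k then 1 else 0)"
      by (simp only: ik(1) if_True)
  qed
qed

lemma not_dvd_det_if_kernel_trivial_mod:
  fixes p :: int
  assumes p: "prime p" and ker: "kernel_trivial_mod p n a"
  shows "\<not> p dvd det (mat n n (\<lambda>(i, j). a i j))"
proof
  assume dvd: "p dvd det (mat n n (\<lambda>(i, j). a i j))"
  have p1: "p > 1"
    using p prime_gt_1_int by blast
  obtain X where X: "\<And>i k. i < n \<Longrightarrow> k < n \<Longrightarrow>
      (\<Sum>j<n. a i j * X k j) mod p = (if i = k then 1 else 0)"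
    using kernel_trivial_mod_right_inverse[OF p1 ker] by blast
  define A where "A = mat n n (\<lambda>(i, j). a i j)"
  define XM where "XM = mat n n (\<lambda>(j, k). X k j)"
  have A: "A \<in> carrier_mat n n" and XM: "XM \<in> carrier_mat n n"
    unfolding A_def XM_def by auto
  have "det (A * XM) mod p = det (1\<^sub>m n) mod p"
  proof (rule det_mod_eq)
    fix i k assume "i < n" "k < n"
    then have "(A * XM) $$ (i, k) = (\<Sum>j<n. a i j * X k j)"
      unfolding A_def XM_def by (simp add: scalar_prod_def lessThan_atLeast0 row_def col_def)
    with X[OF \<open>i < n\<close> \<open>k < n\<close>] show "(A * XM) $$ (i, k) mod p = 1\<^sub>m n $$ (i, k) mod p"
      using \<open>i < n\<close> \<open>k < n\<close> p1 by simp
  qed (use A XM in auto)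
  then have "(det A * det XM) mod p = 1"
    using det_mult[OF A XM] p1 by simp
  moreover have "p dvd det A * det XM"
    using dvd unfolding A_def by simp
  ultimately show False
    using p1 by simp
qed

lemma kernel_trivial_mod_if_not_dvd_det:
  fixes p :: int
  assumes p: "prime p" and det: "\<not> p dvd det (mat n n (\<lambda>(i, j). a i j))"
  shows "kernel_trivial_mod p n a"
  unfolding kernel_trivial_mod_def
proof (intro allI impI)
  fix x :: "nat \<Rightarrow> int" and j
  assume ax: "\<forall>i<n. p dvd (\<Sum>j<n. a i j * x j)" and j: "j < n"
  define A where "A = mat n n (\<lambda>(i, j). a i j)"
  define v where "v = vec n x"
  have A: "A \<in> carrier_mat n n" and v: "v \<in> carrier_vec n"
    unfolding A_def v_def by auto
  have Av: "(A *\<^sub>v v) $ i = (\<Sum>j<n. a i j * x j)" if "i < n" for i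
    using that unfolding A_def v_def by (simp add: scalar_prod_def lessThan_atLeast0 row_def)
  have "det A * x j = ((det A \<cdot>\<^sub>m 1\<^sub>m n) *\<^sub>v v) $ j"
    using j unfolding v_def by simp
  also have "\<dots> = ((adj_mat A * A) *\<^sub>v v) $ j"
    using adj_mat(3)[OF A] by simp
  also have "\<dots> = (adj_mat A *\<^sub>v (A *\<^sub>v v)) $ j"
    using adj_mat(1)[OF A] A v by (simp add: assoc_mult_mat_vec)
  also have "\<dots> = (\<Sum>k\<in>{0..<n}. row (adj_mat A) j $ k * (A *\<^sub>v v) $ k)"
    using j adj_mat(1)[OF A] A by (simp add: scalar_prod_def)
  also have "p dvd \<dots>"
    using ax Av by (intro dvd_sum dvd_mult) simp
  finally have "p dvd det A * x j" .
  then show "p dvd x j"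
    using det p unfolding A_def by (simp add: prime_dvd_mult_iff)
qed

lemma kernel_trivial_mod_transpose:
  fixes p :: int
  assumes p: "prime p" and ker: "kernel_trivial_mod p n a"
  shows "kernel_trivial_mod p n (\<lambda>i j. a j i)"
proof -
  have "det (mat n n (\<lambda>(i, j). a j i)) = det (transpose_mat (mat n n (\<lambda>(i, j). a i j)))"
    by (rule arg_cong[where f=det]) (auto intro!: eq_matI)
  also have "\<dots> = det (mat n n (\<lambda>(i, j). a i j))"
    by (rule det_transpose) auto
  finally show ?thesis
    using not_dvd_det_if_kernel_trivial_mod[OF p ker] kernel_trivial_mod_if_not_dvd_det[OF p] by metis
qed

lemma int_unit_if_no_prime_divisor:
  fixes d :: int
  assumes "\<And>p. prime p \<Longrightarrow> \<not> p dvd d"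
  shows "d = 1 \<or> d = -1"
proof -
  have "d \<noteq> 0"
    using assms[of 2] by auto
  then have "is_unit d"
    using prime_divisor_exists assms by blast
  then have "\<bar>d\<bar> = 1"
    by simp
  then show ?thesis
    by linarith
qed

lemma skew_quadratic_form_eq_0:
  fixes a :: "nat \<Rightarrow> nat \<Rightarrow> real"
  assumes skew: "\<And>i j. i < n \<Longrightarrow> j < n \<Longrightarrow> a j i = - a i j"
  shows "(\<Sum>i<n. \<Sum>j<n. v i * (a i j * v j)) = 0"
proof -
  let ?S = "\<Sum>i<n. \<Sum>j<n. v i * (a i j * v j)"
  have "?S = (\<Sum>j<n. \<Sum>i<n. v i * (a i j * v j))"
    by (rule sum.swap)
  also have "\<dots> = (\<Sum>j<n. \<Sum>i<n. - (v j * (a j i * v i)))"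
  proof (intro sum.cong refl)
    fix i j assume "j \<in> {..<n}" "i \<in> {..<n}"
    then show "v i * (a i j * v j) = - (v j * (a j i * v i))"
      using skew[of i j] by simp
  qed
  also have "\<dots> = - ?S"
    by (simp add: sum_negf)
  finally show ?thesis
    by simp
qed

text \<open>With A the real matrix, det (t I + A) is positive for large t and, since a skew-symmetric
  matrix has no nonzero real eigenvalue, never vanishes for t > 0.\<close>

lemma det_skew_symmetric_nonneg:
  fixes a :: "nat \<Rightarrow> nat \<Rightarrow> int"
  assumes skew: "\<And>i j. i < n \<Longrightarrow> j < n \<Longrightarrow> a j i = - a i j"
  shows "det (mat n n (\<lambda>(i, j). a i j)) \<ge> 0"
proof (rule ccontr)
  assume neg: "\<not> ?thesis"
  define R where "R = mat n n (\<lambda>(i, j). real_of_int (a i j))"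
  define M where "M t = mat n n (\<lambda>(i, j). (if i = j then t else 0) + real_of_int (a i j))" for t :: real
  define q where "q = char_poly (- R)"
  have R: "R \<in> carrier_mat n n" and M: "M t \<in> carrier_mat n n" for t
    unfolding R_def M_def by auto
  have q_eval: "poly q t = det (M t)" for t
    unfolding q_def char_poly_def
    by (rule poly_det_cong[of _ n]) (auto simp: char_poly_matrix_def M_def R_def)
  have "R = map_mat real_of_int (mat n n (\<lambda>(i, j). a i j))"
    unfolding R_def by (auto intro!: eq_matI)
  then have "det R = real_of_int (det (mat n n (\<lambda>(i, j). a i j)))"
    by (simp add: of_int_hom.hom_det)
  moreover have "M 0 = R"
    unfolding M_def R_def by (auto intro!: eq_matI)
  ultimately have q0: "poly q 0 < 0"
    using q_eval[of 0] neg by simp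
  have lc: "lead_coeff q = 1"
    using degree_monic_char_poly[of "- R" n] R unfolding q_def by simp
  then obtain T where T: "\<forall>x\<ge>T. poly q x \<ge> lead_coeff q"
    using poly_pinfty_gt_lc[of q] by auto
  have "poly q (max T 1) > 0" "(0::real) < max T 1"
    using T[rule_format, of "max T 1"] lc by auto
  then obtain t where t: "0 < t" "poly q t = 0"
    using poly_IVT_pos[OF _ q0] by blast
  then have "det (M t) = 0"
    using q_eval by simp
  then obtain v where v: "v \<in> carrier_vec n" "v \<noteq> 0\<^sub>v n" "M t *\<^sub>v v = 0\<^sub>v n"
    using det_0_iff_vec_prod_zero[OF M] by blast
  have Mv: "(M t *\<^sub>v v) $ i = t * v $ i + (\<Sum>j<n. real_of_int (a i j) * v $ j)" if "i < n" for i
  proof -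
    have "(M t *\<^sub>v v) $ i = (\<Sum>j<n. ((if i = j then t else 0) + real_of_int (a i j)) * v $ j)"
      using that v(1) unfolding M_def by (simp add: scalar_prod_def row_def lessThan_atLeast0)
    also have "\<dots> = (\<Sum>j<n. (if i = j then t else 0) * v $ j) + (\<Sum>j<n. real_of_int (a i j) * v $ j)"
      by (simp add: sum.distrib[symmetric] distrib_right)
    also have "(\<Sum>j<n. (if i = j then t else 0) * v $ j) = (\<Sum>j<n. if i = j then t * v $ i else 0)"
      by (rule sum.cong) auto
    also have "\<dots> = t * v $ i"
      using that by simp
    finally show ?thesis .
  qed
  have "0 = (\<Sum>i<n. v $ i * (M t *\<^sub>v v) $ i)"
    using v(3) by simp
  also have "\<dots> = (\<Sum>i<n. t * (v $ i * v $ i) + v $ i * (\<Sum>j<n. real_of_int (a i j) * v $ j))"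
    by (intro sum.cong refl) (simp add: Mv algebra_simps)
  also have "\<dots> = t * (\<Sum>i<n. v $ i * v $ i) + (\<Sum>i<n. \<Sum>j<n. v $ i * (real_of_int (a i j) * v $ j))"
    by (simp add: sum.distrib sum_distrib_left)
  also have "(\<Sum>i<n. \<Sum>j<n. v $ i * (real_of_int (a i j) * v $ j)) = 0"
  proof (rule skew_quadratic_form_eq_0)
    fix i j assume "i < n" "j < n"
    then show "real_of_int (a j i) = - real_of_int (a i j)"
      using skew[of i j] by simp
  qed
  finally have "(\<Sum>i<n. v $ i * v $ i) = 0"
    using t(1) by simp
  then have "v = 0\<^sub>v n"
    using v(1) sum_nonneg_eq_0_iff[of "{..<n}" "\<lambda>i. v $ i * v $ i"] by (auto intro!: eq_vecI)
  with v(2) show False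
    by simp
qed

section \<open>Chains with coefficients in $\mathbb{Z}/2$\<close>

text \<open>A $\mathbb{Z}/2$-chain is a set, and chains are added by symmetric difference. This is a
  constant rather than the abbreviation \<open>sym_diff\<close>, so that the simplifier keeps chains folded.\<close>

definition symdiff :: "'x set \<Rightarrow> 'x set \<Rightarrow> 'x set" where
  "symdiff X Y = (X - Y) \<union> (Y - X)"

lemma symdiff_self [simp]: "symdiff X X = {}"
  and symdiff_empty [simp]: "symdiff X {} = X" "symdiff {} X = X"
  and symdiff_cancel_left: "symdiff X (symdiff X Y) = Y"
  and symdiff_commute: "symdiff X Y = symdiff Y X"
  and symdiff_singletons_trans: "symdiff (symdiff {a} {b}) (symdiff {b} {c}) = symdiff {a} {c}"
  and symdiff_subset: "X \<subseteq> A \<Longrightarrow> Y \<subseteq> A \<Longrightarrow> symdiff X Y \<subseteq> A"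
  unfolding symdiff_def by auto

lemma inj_on_symdiff: "inj_on (symdiff X) S"
  by (metis inj_onI symdiff_cancel_left)

lemma card_symdiff:
  assumes "finite X" "finite Y"
  shows "card (symdiff X Y) + 2 * card (X \<inter> Y) = card X + card Y"
proof -
  have "symdiff X Y = (X \<union> Y) - (X \<inter> Y)"
    unfolding symdiff_def by auto
  moreover have "card ((X \<union> Y) - (X \<inter> Y)) = card (X \<union> Y) - card (X \<inter> Y)"
    by (rule card_Diff_subset) (use assms in auto)
  moreover have "card (X \<union> Y) + card (X \<inter> Y) = card X + card Y"
    using assms by (rule card_Un_Int[symmetric])
  moreover have "card (X \<inter> Y) \<le> card (X \<union> Y)"
    by (rule card_mono) (use assms in auto)
  ultimately show ?thesis
    by simp
qed

lemma odd_card_symdiff: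
  assumes "finite X" "finite Y"
  shows "odd (card (symdiff X Y)) \<longleftrightarrow> odd (card X) \<noteq> odd (card Y)"
  using card_symdiff[OF assms] by presburger

definition odd_incident :: "('x \<Rightarrow> 'y \<Rightarrow> bool) \<Rightarrow> 'y set \<Rightarrow> 'x set \<Rightarrow> 'y set" where
  "odd_incident inc B Z = {y \<in> B. odd (card {x \<in> Z. inc x y})}"

lemma odd_incident_subset: "odd_incident inc B Z \<subseteq> B"
  unfolding odd_incident_def by auto

lemma odd_incident_empty [simp]: "odd_incident inc B {} = {}"
  unfolding odd_incident_def by simp

lemma odd_incident_symdiff:
  assumes "finite X" "finite Y"
  shows "odd_incident inc B (symdiff X Y) = symdiff (odd_incident inc B X) (odd_incident inc B Y)"
proof -
  have "odd (card {x \<in> symdiff X Y. inc x y})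
      \<longleftrightarrow> odd (card {x \<in> X. inc x y}) \<noteq> odd (card {x \<in> Y. inc x y})" for y
  proof -
    have "{x \<in> symdiff X Y. inc x y} = symdiff {x \<in> X. inc x y} {x \<in> Y. inc x y}"
      unfolding symdiff_def by auto
    then show ?thesis
      using odd_card_symdiff[of "{x \<in> X. inc x y}" "{x \<in> Y. inc x y}"] assms by simp
  qed
  then show ?thesis
    unfolding odd_incident_def symdiff_def by auto
qed

lemma card_filter_insert:
  assumes "finite A" "x \<notin> A"
  shows "card {y \<in> insert x A. P y} = (if P x then 1 else 0) + card {y \<in> A. P y}"
proof (cases "P x")
  case True
  then have "{y \<in> insert x A. P y} = insert x {y \<in> A. P y}"
    by auto
  with True assms show ?thesis
    by simp
next
  case False
  then have "{y \<in> insert x A. P y} = {y \<in> A. P y}"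
    by auto
  with False show ?thesis
    by simp
qed

lemma card_filter_singleton: "card {y \<in> {x}. P y} = (if P x then 1 else 0)"
  by (cases "P x") (simp_all add: Collect_conj_eq)

lemma card_filter_doubleton:
  "x \<noteq> y \<Longrightarrow> card {z \<in> {x, y}. P z} = (if P x then 1 else 0) + (if P y then 1 else 0)"
  using card_filter_insert[of "{y}" x P] card_filter_singleton[of y P] by simp

lemma card_filter_triple:
  "x \<noteq> y \<Longrightarrow> x \<noteq> z \<Longrightarrow> y \<noteq> z \<Longrightarrow>
    card {w \<in> {x, y, z}. P w} = (if P x then 1 else 0) + (if P y then 1 else 0) + (if P z then 1 else 0)"
  using card_filter_insert[of "{y, z}" x P] card_filter_doubleton[of y z P] by simp

lemma even_sum_iff:
  fixes f :: "'x \<Rightarrow> int"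
  assumes "finite A"
  shows "even (sum f A) \<longleftrightarrow> even (card {x \<in> A. odd (f x)})"
  using assms
proof (induction A rule: finite_induct)
  case (insert x A)
  then have "card {y \<in> insert x A. odd (f y)} = (if odd (f x) then 1 else 0) + card {y \<in> A. odd (f y)}"
    by (intro card_filter_insert)
  with insert show ?case
    by auto
qed simp

lemma card_Pow_eq_card_image_times_card_kernel:
  fixes \<phi> :: "'x set \<Rightarrow> 'y set"
  assumes A: "finite A"
    and hom: "\<And>X Y. X \<subseteq> A \<Longrightarrow> Y \<subseteq> A \<Longrightarrow> \<phi> (symdiff X Y) = symdiff (\<phi> X) (\<phi> Y)"
  shows "card (Pow A) = card (\<phi> ` Pow A) * card {X \<in> Pow A. \<phi> X = {}}"
proof -
  define K where "K = {X \<in> Pow A. \<phi> X = {}}"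
  define fib where "fib y = {X \<in> Pow A. \<phi> X = y}" for y
  have card_fib: "card (fib y) = card K" if y: "y \<in> \<phi> ` Pow A" for y
  proof -
    obtain X0 where "y = \<phi> X0" "X0 \<in> Pow A"
      using y by (rule imageE)
    then have X0: "X0 \<subseteq> A" "\<phi> X0 = y"
      by simp_all
    have "fib y = symdiff X0 ` K"
    proof (intro equalityI subsetI)
      fix X assume X: "X \<in> fib y"
      then have XA: "X \<subseteq> A" "\<phi> X = y"
        unfolding fib_def by auto
      then have "symdiff X0 X \<in> K"
        unfolding K_def using hom[OF X0(1) XA(1)] X0 symdiff_subset[OF X0(1) XA(1)] by simp
      moreover have "X = symdiff X0 (symdiff X0 X)"
        by (simp add: symdiff_cancel_left)
      ultimately show "X \<in> symdiff X0 ` K"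
        by blast
    next
      fix X assume "X \<in> symdiff X0 ` K"
      then obtain Q where Q: "Q \<in> K" "X = symdiff X0 Q"
        by blast
      then have QA: "Q \<subseteq> A" "\<phi> Q = {}"
        unfolding K_def by auto
      then show "X \<in> fib y"
        unfolding fib_def using hom[OF X0(1) QA(1)] X0 Q(2) symdiff_subset[OF X0(1) QA(1)] by simp
    qed
    then show ?thesis
      by (simp add: card_image inj_on_symdiff)
  qed
  have "Pow A = (\<Union>y \<in> \<phi> ` Pow A. fib y)"
    unfolding fib_def by auto
  then have "card (Pow A) = card (\<Union>y \<in> \<phi> ` Pow A. fib y)"
    by simp
  also have "\<dots> = (\<Sum>y \<in> \<phi> ` Pow A. card (fib y))"
    by (rule card_UN_disjoint) (use A in \<open>auto simp: fib_def\<close>)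
  also have "\<dots> = card (\<phi> ` Pow A) * card K"
    using card_fib by simp
  finally show ?thesis
    unfolding K_def .
qed

lemma card_even_subsets:
  assumes S: "finite S" "S \<noteq> {}"
  shows "2 * card {W \<in> Pow S. even (card W)} = 2 ^ card S"
proof -
  obtain s where s: "s \<in> S"
    using S by blast
  define Ev where "Ev = {W \<in> Pow S. even (card W)}"
  define Od where "Od = {W \<in> Pow S. odd (card W)}"
  have flip: "symdiff {s} W \<subseteq> S \<and> (odd (card (symdiff {s} W)) \<longleftrightarrow> even (card W))" if "W \<subseteq> S" for W
    using odd_card_symdiff[of "{s}" W] symdiff_subset[of "{s}" S W] that s S finite_subset by auto
  have "Od = symdiff {s} ` Ev"
  proof (intro equalityI subsetI)
    fix W assume "W \<in> Od"
    then have "symdiff {s} W \<in> Ev"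
      using flip unfolding Od_def Ev_def by auto
    then show "W \<in> symdiff {s} ` Ev"
      by (metis image_eqI symdiff_cancel_left)
  qed (use flip in \<open>auto simp: Od_def Ev_def\<close>)
  then have "card Od = card Ev"
    by (simp add: card_image inj_on_symdiff)
  moreover have "card (Pow S) = card Ev + card Od"
    using S(1) by (subst card_Un_disjoint[symmetric]) (auto simp: Ev_def Od_def intro: arg_cong[where f=card])
  ultimately show ?thesis
    using S(1) by (simp add: card_Pow Ev_def)
qed

lemma symdiff_in_image:
  assumes hom: "\<And>X Y. X \<subseteq> A \<Longrightarrow> Y \<subseteq> A \<Longrightarrow> \<phi> (symdiff X Y) = symdiff (\<phi> X) (\<phi> Y)"
    and "P \<in> \<phi> ` Pow A" "Q \<in> \<phi> ` Pow A"
  shows "symdiff P Q \<in> \<phi> ` Pow A"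
proof -
  obtain X Y where "X \<subseteq> A" "Y \<subseteq> A" "P = \<phi> X" "Q = \<phi> Y"
    using assms(2,3) by auto
  then show ?thesis
    using hom symdiff_subset by (metis Pow_iff image_eqI)
qed

lemma even_subsets_in_image:
  fixes \<phi> :: "'x set \<Rightarrow> 'y set"
  assumes hom: "\<And>X Y. X \<subseteq> A \<Longrightarrow> Y \<subseteq> A \<Longrightarrow> \<phi> (symdiff X Y) = symdiff (\<phi> X) (\<phi> Y)"
    and pairs: "\<And>u w. u \<in> B \<Longrightarrow> w \<in> B \<Longrightarrow> symdiff {u} {w} \<in> \<phi> ` Pow A"
  shows "finite W \<Longrightarrow> W \<subseteq> B \<Longrightarrow> even (card W) \<Longrightarrow> W \<in> \<phi> ` Pow A"
proof (induction "card W" arbitrary: W rule: less_induct)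
  case less
  show ?case
  proof (cases "W = {}")
    case True
    have "\<phi> {} = {}"
      using hom[of "{}" "{}"] by simp
    with True show ?thesis
      by blast
  next
    case False
    then obtain u where u: "u \<in> W"
      by blast
    have "W \<noteq> {u}"
      using less.prems(3) by auto
    then obtain w where w: "w \<in> W" "w \<noteq> u"
      using u by blast
    let ?W' = "W - {u, w}"
    have "card {u, w} \<le> card W"
      using u w less.prems(1) by (intro card_mono) auto
    then have "card ?W' = card W - 2" "card W \<ge> 2"
      using u w less.prems(1) by (simp_all add: card_Diff_subset)
    then have "card ?W' < card W" "even (card ?W')"
      using less.prems(3) by auto
    then have "?W' \<in> \<phi> ` Pow A"
      using less.hyps less.prems by auto
    then have "symdiff ?W' (symdiff {u} {w}) \<in> \<phi> ` Pow A"
      using pairs u w less.prems(2) by (blast intro: symdiff_in_image[OF hom])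
    moreover have "symdiff ?W' (symdiff {u} {w}) = W"
      unfolding symdiff_def using u w by auto
    ultimately show ?thesis
      by simp
  qed
qed

lemma symdiff_in_image_if_rtrancl:
  assumes hom: "\<And>X Y. X \<subseteq> A \<Longrightarrow> Y \<subseteq> A \<Longrightarrow> \<phi> (symdiff X Y) = symdiff (\<phi> X) (\<phi> Y)"
    and step: "\<And>u w. (u, w) \<in> R \<Longrightarrow> symdiff {u} {w} \<in> \<phi> ` Pow A"
    and uw: "(u, w) \<in> R\<^sup>*"
  shows "symdiff {u} {w} \<in> \<phi> ` Pow A"
  using uw
proof (induction rule: rtrancl_induct)
  case base
  have "\<phi> {} = {}"
    using hom[of "{}" "{}"] by simp
  then show ?case
    by auto
next
  case (step y z)
  then have "symdiff (symdiff {u} {y}) (symdiff {y} {z}) \<in> \<phi> ` Pow A"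
    using assms(2) by (blast intro: symdiff_in_image[OF hom])
  then show ?case
    by (simp add: symdiff_singletons_trans)
qed

lemma card_kernel_bound:
  fixes \<phi> :: "'x set \<Rightarrow> 'y set"
  assumes A: "finite A" and B: "finite B" "B \<noteq> {}"
    and hom: "\<And>X Y. X \<subseteq> A \<Longrightarrow> Y \<subseteq> A \<Longrightarrow> \<phi> (symdiff X Y) = symdiff (\<phi> X) (\<phi> Y)"
    and pairs: "\<And>u w. u \<in> B \<Longrightarrow> w \<in> B \<Longrightarrow> symdiff {u} {w} \<in> \<phi> ` Pow A"
  shows "card {X \<in> Pow A. \<phi> X = {}} * 2 ^ card B \<le> 2 * 2 ^ card A"
proof -
  have "{W \<in> Pow B. even (card W)} \<subseteq> \<phi> ` Pow A"
    using even_subsets_in_image[OF hom pairs] B finite_subset by blast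
  then have "card {W \<in> Pow B. even (card W)} \<le> card (\<phi> ` Pow A)"
    using A by (simp add: card_mono)
  then have "2 ^ card B \<le> 2 * card (\<phi> ` Pow A)"
    using card_even_subsets[OF B] by linarith
  then have "card {X \<in> Pow A. \<phi> X = {}} * 2 ^ card B
      \<le> card {X \<in> Pow A. \<phi> X = {}} * (2 * card (\<phi> ` Pow A))"
    by simp
  also have "\<dots> = 2 * card (Pow A)"
    using card_Pow_eq_card_image_times_card_kernel[OF A hom] by simp
  finally show ?thesis
    using A by (simp add: card_Pow)
qed

section \<open>Connected graphs with as many edges as vertices\<close>

lemma spanning_connected_rtrancl:
  "spanning_connected V H \<Longrightarrow> u \<in> V \<Longrightarrow> w \<in> V \<Longrightarrow> (u, w) \<in> {(x, y). {x, y} \<in> H}\<^sup>*"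
  unfolding spanning_connected_def by blast

lemma spanning_connected_invariant:
  assumes "spanning_connected V H" and edge: "\<And>a b. {a, b} \<in> H \<Longrightarrow> P a \<longleftrightarrow> P b"
    and "u \<in> V" "w \<in> V"
  shows "P u \<longleftrightarrow> P w"
  using spanning_connected_rtrancl[OF assms(1,3,4)]
  by (induction rule: rtrancl_induct) (use edge in auto)

lemma cycle_edge:
  assumes "is_cycle H vs" "i < length vs"
  shows "{vs ! i, vs ! (Suc i mod length vs)} \<in> H"
  using assms unfolding is_cycle_def by simp

lemma cycle_alternating_mod:
  fixes \<phi> :: "'a \<Rightarrow> int"
  assumes cyc: "is_cycle H vs" and edges: "\<And>a b. {a, b} \<in> H \<Longrightarrow> p dvd \<phi> a + \<phi> b"
    and "i < length vs"
  shows "p dvd \<phi> (vs ! i) - (-1) ^ i * \<phi> (vs ! 0)"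
  using \<open>i < length vs\<close>
proof (induction i)
  case (Suc i)
  then have "{vs ! i, vs ! Suc i} \<in> H"
    using cycle_edge[OF cyc, of i] by simp
  then have "p dvd \<phi> (vs ! i) + \<phi> (vs ! Suc i)"
    by (rule edges)
  moreover have "p dvd \<phi> (vs ! i) - (-1) ^ i * \<phi> (vs ! 0)"
    using Suc by simp
  ultimately have "p dvd (\<phi> (vs ! i) + \<phi> (vs ! Suc i)) - (\<phi> (vs ! i) - (-1) ^ i * \<phi> (vs ! 0))"
    by (rule dvd_diff)
  then show ?case
    by (simp add: algebra_simps)
qed simp

text \<open>Going once around the odd cycle gives 2 \<phi> \<equiv> 0 at its first vertex, and connectivity
  propagates \<phi> \<equiv> 0 to all vertices.\<close>

lemma vertex_weights_zero_mod_if_edge_sums_zero: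
  fixes \<phi> :: "'a \<Rightarrow> int" and p :: int
  assumes p: "prime p" "p \<noteq> 2"
    and edges: "\<And>a b. {a, b} \<in> H \<Longrightarrow> p dvd \<phi> a + \<phi> b"
    and conn: "spanning_connected V H" and cyc: "is_cycle H vs" "odd (length vs)" "vs ! 0 \<in> V"
    and "v \<in> V"
  shows "p dvd \<phi> v"
proof -
  define k where "k = length vs"
  have k: "k \<ge> 3" "even (k - 1)" "Suc (k - 1) = k"
    using cyc unfolding is_cycle_def k_def by auto
  have "p dvd \<phi> (vs ! (k - 1)) - \<phi> (vs ! 0)"
    using cycle_alternating_mod[OF cyc(1) edges, where i = "k - 1"] k unfolding k_def by simp
  moreover have "p dvd \<phi> (vs ! (k - 1)) + \<phi> (vs ! 0)"
    using edges cycle_edge[OF cyc(1), of "k - 1"] k unfolding k_def by simp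
  ultimately have "p dvd (\<phi> (vs ! (k - 1)) + \<phi> (vs ! 0)) - (\<phi> (vs ! (k - 1)) - \<phi> (vs ! 0))"
    by (rule dvd_diff[rotated])
  then have "p dvd 2 * \<phi> (vs ! 0)"
    by simp
  moreover have "\<not> p dvd 2"
    using p prime_ge_2_int[of p] zdvd_imp_le[of p 2] by fastforce
  ultimately have start: "p dvd \<phi> (vs ! 0)"
    using p by (simp add: prime_dvd_mult_iff)
  show ?thesis
    using spanning_connected_rtrancl[OF conn cyc(3) \<open>v \<in> V\<close>]
  proof (induction rule: rtrancl_induct)
    case base
    then show ?case
      by (rule start)
  next
    case (step y z)
    then have "p dvd \<phi> y + \<phi> z"
      using edges by simp
    then have "p dvd (\<phi> y + \<phi> z) - \<phi> y"
      using step.IH by (rule dvd_diff)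
    then show ?case
      by simp
  qed
qed

definition cycle_edges :: "'a list \<Rightarrow> 'a set set" where
  "cycle_edges vs = (\<lambda>i. {vs ! i, vs ! (Suc i mod length vs)}) ` {..<length vs}"

lemma Suc_mod_eq_iff:
  fixes i j k :: nat
  assumes "i < k" "j < k"
  shows "Suc i mod k = j \<longleftrightarrow> i = (j + k - 1) mod k"
proof
  assume "Suc i mod k = j"
  then have "(j + k - 1) mod k = (Suc i mod k + (k - 1)) mod k"
    using assms by simp
  also have "\<dots> = (Suc i + (k - 1)) mod k"
    by (simp add: mod_add_left_eq)
  also have "Suc i + (k - 1) = i + k"
    using assms by simp
  finally show "i = (j + k - 1) mod k"
    using assms by simp
next
  assume "i = (j + k - 1) mod k"
  then have "Suc i mod k = Suc ((j + k - 1) mod k) mod k"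
    by simp
  also have "\<dots> = Suc (j + k - 1) mod k"
    by (simp add: mod_Suc_eq)
  also have "Suc (j + k - 1) = j + k"
    using assms by simp
  finally show "Suc i mod k = j"
    using assms by simp
qed

context
  fixes vs :: "'a list"
  assumes vs: "distinct vs" "length vs \<ge> 3"
begin

lemma inj_on_cycle_edge: "inj_on (\<lambda>i. {vs ! i, vs ! (Suc i mod length vs)}) {..<length vs}"
proof
  fix i j
  define k where "k = length vs"
  assume "i \<in> {..<length vs}" "j \<in> {..<length vs}"
    and eq: "{vs ! i, vs ! (Suc i mod length vs)} = {vs ! j, vs ! (Suc j mod length vs)}"
  moreover have "0 < k"
    using vs(2) unfolding k_def by linarith
  ultimately have ik: "i < k" and jk: "j < k" and si: "Suc i mod k < k" and sj: "Suc j mod k < k"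
    unfolding k_def by auto
  have "vs ! i = vs ! j \<and> vs ! (Suc i mod k) = vs ! (Suc j mod k)
      \<or> vs ! i = vs ! (Suc j mod k) \<and> vs ! (Suc i mod k) = vs ! j"
    using eq unfolding k_def by (simp add: doubleton_eq_iff)
  then show "i = j"
  proof
    assume "vs ! i = vs ! j \<and> vs ! (Suc i mod k) = vs ! (Suc j mod k)"
    then show "i = j"
      using vs ik jk unfolding k_def by (simp add: nth_eq_iff_index_eq)
  next
    assume h: "vs ! i = vs ! (Suc j mod k) \<and> vs ! (Suc i mod k) = vs ! j"
    have 1: "i = Suc j mod k"
      using h vs ik sj unfolding k_def by (simp add: nth_eq_iff_index_eq)
    have 2: "Suc i mod k = j"
      using h vs jk si unfolding k_def by (simp add: nth_eq_iff_index_eq)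
    have "Suc (Suc i) mod k = Suc (Suc i mod k) mod k"
      by (simp add: mod_Suc_eq)
    also have "\<dots> = i mod k"
      using 1 2 ik by simp
    finally have "k dvd 2"
      by (simp add: mod_eq_dvd_iff_nat)
    then have "k \<le> 2"
      by (simp add: dvd_imp_le)
    then show "i = j"
      using vs unfolding k_def by simp
  qed
qed

lemma card_cycle_edges: "card (cycle_edges vs) = length vs"
  unfolding cycle_edges_def using inj_on_cycle_edge by (simp add: card_image)

lemma even_degree_cycle_edges: "even (card {e \<in> cycle_edges vs. v \<in> e})"
proof -
  define k where "k = length vs"
  define ed where "ed i = {vs ! i, vs ! (Suc i mod k)}" for i
  have k: "k \<ge> 3"
    using vs unfolding k_def by simp
  have "{e \<in> cycle_edges vs. v \<in> e} = ed ` {i \<in> {..<k}. v \<in> ed i}"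
    unfolding cycle_edges_def ed_def k_def by auto
  moreover have "inj_on ed {i \<in> {..<k}. v \<in> ed i}"
    using inj_on_cycle_edge unfolding ed_def k_def by (rule inj_on_subset) auto
  ultimately have card_eq: "card {e \<in> cycle_edges vs. v \<in> e} = card {i \<in> {..<k}. v \<in> ed i}"
    by (simp add: card_image)
  show ?thesis
  proof (cases "v \<in> set vs")
    case False
    have "v \<notin> ed i" if "i < k" for i
    proof -
      have "Suc i mod k < k"
        using k by simp
      then have "vs ! (Suc i mod k) \<in> set vs" "vs ! i \<in> set vs"
        using that unfolding k_def by auto
      then show ?thesis
        using False unfolding ed_def by auto
    qed
    then have "{i \<in> {..<k}. v \<in> ed i} = {}"
      by auto
    then have "card {i \<in> {..<k}. v \<in> ed i} = 0"
      by (metis card.empty)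
    then show ?thesis
      unfolding card_eq by (metis even_zero)
  next
    case True
    then obtain j where j: "j < k" "vs ! j = v"
      unfolding k_def by (metis in_set_conv_nth)
    define j' where "j' = (j + k - 1) mod k"
    have j'k: "j' < k"
      unfolding j'_def using k by simp
    have "{i \<in> {..<k}. v \<in> ed i} = {j, j'}"
    proof (intro equalityI subsetI)
      fix i assume "i \<in> {i \<in> {..<k}. v \<in> ed i}"
      then have ik: "i < k" and "v = vs ! i \<or> v = vs ! (Suc i mod k)"
        unfolding ed_def by auto
      moreover have "Suc i mod k < k"
        using k by simp
      ultimately have "i = j \<or> Suc i mod k = j"
        using j vs unfolding k_def by (auto simp: nth_eq_iff_index_eq)
      then show "i \<in> {j, j'}"
        using Suc_mod_eq_iff[OF ik j(1)] unfolding j'_def by auto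
    next
      fix i assume "i \<in> {j, j'}"
      moreover have "Suc j' mod k = j"
        using Suc_mod_eq_iff[OF j'k j(1)] unfolding j'_def by simp
      ultimately show "i \<in> {i \<in> {..<k}. v \<in> ed i}"
        using j j'k unfolding ed_def by auto
    qed
    moreover have "j \<noteq> j'"
    proof
      assume "j = j'"
      then have "(j + (k - 1)) mod k = j mod k"
        using j(1) k unfolding j'_def by simp
      then have "k dvd k - 1"
        by (simp add: mod_eq_dvd_iff_nat)
      then show False
        using k dvd_imp_le[of k "k - 1"] by simp
    qed
    ultimately have "card {i \<in> {..<k}. v \<in> ed i} = 2"
      by simp
    with card_eq show ?thesis
      by simp
  qed
qed

end

lemma cycle_edges_subset: "is_cycle H vs \<Longrightarrow> cycle_edges vs \<subseteq> H"
  unfolding cycle_edges_def is_cycle_def by auto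

lemma cycle_vertex_in_V:
  assumes cyc: "is_cycle H vs"
    and H: "\<And>e. e \<in> H \<Longrightarrow> \<exists>a b. a \<noteq> b \<and> a \<in> V \<and> b \<in> V \<and> e = {a, b}"
  shows "vs ! 0 \<in> V"
proof -
  have "0 < length vs"
    using cyc unfolding is_cycle_def by auto
  then have "{vs ! 0, vs ! (Suc 0 mod length vs)} \<in> H"
    by (rule cycle_edge[OF cyc])
  then obtain a b where "a \<in> V" "b \<in> V" "{vs ! 0, vs ! (Suc 0 mod length vs)} = {a, b}"
    using H by blast
  then show ?thesis
    by auto
qed

text \<open>The incidence matrix of such a graph is square and, by the previous lemma, its transpose has
  trivial kernel modulo every odd prime; hence so does the matrix itself.\<close>

lemma edge_weights_zero_mod_if_vertex_sums_zero:
  fixes Y :: "'a set \<Rightarrow> int" and p :: int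
  assumes p: "prime p" "p \<noteq> 2"
    and V: "finite V" and H: "finite H" "card H = card V"
    and H_edges: "\<And>e. e \<in> H \<Longrightarrow> \<exists>a b. a \<noteq> b \<and> a \<in> V \<and> b \<in> V \<and> e = {a, b}"
    and conn: "spanning_connected V H" and cyc: "is_cycle H vs" "odd (length vs)"
    and sums: "\<And>v. v \<in> V \<Longrightarrow> p dvd (\<Sum>e \<in> {e \<in> H. v \<in> e}. Y e)"
    and "e \<in> H"
  shows "p dvd Y e"
proof -
  define m where "m = card V"
  obtain gV where gV: "bij_betw gV {..<m} V"
    using ex_bij_betw_nat_finite[OF V] unfolding m_def by (metis lessThan_atLeast0)
  obtain gH where gH: "bij_betw gH {..<m} H"
    using ex_bij_betw_nat_finite[OF H(1)] H(2) unfolding m_def by (metis lessThan_atLeast0)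
  define t where "t j i = (if gV i \<in> gH j then 1 else (0::int))" for j i
  have vs0: "vs ! 0 \<in> V"
    using cycle_vertex_in_V[OF cyc(1) H_edges] .
  have "kernel_trivial_mod p m t"
    unfolding kernel_trivial_mod_def
  proof (intro allI impI)
    fix \<phi> :: "nat \<Rightarrow> int" and i
    assume ker: "\<forall>j<m. p dvd (\<Sum>i<m. t j i * \<phi> i)" and "i < m"
    define \<psi> where "\<psi> v = \<phi> (inv_into {..<m} gV v)" for v
    have "p dvd \<psi> a + \<psi> b" if ab: "{a, b} \<in> H" for a b
    proof -
      obtain j where j: "j < m" "gH j = {a, b}"
        using gH ab unfolding bij_betw_def by auto
      have ab_V: "a \<noteq> b" "a \<in> V" "b \<in> V"
        using H_edges[OF ab] by (auto simp: doubleton_eq_iff)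
      have "(\<Sum>i<m. t j i * \<phi> i) = (\<Sum>i<m. if gV i \<in> {a, b} then \<psi> (gV i) else 0)"
        unfolding t_def j(2) \<psi>_def using gV by (intro sum.cong refl) (auto simp: bij_betw_def)
      also have "\<dots> = (\<Sum>v\<in>V. if v \<in> {a, b} then \<psi> v else 0)"
        by (rule sum.reindex_bij_betw[OF gV])
      also have "\<dots> = (\<Sum>v \<in> {v \<in> V. v \<in> {a, b}}. \<psi> v)"
        using V by (simp add: sum.inter_filter)
      also have "{v \<in> V. v \<in> {a, b}} = {a, b}"
        using ab_V by auto
      also have "(\<Sum>v \<in> {a, b}. \<psi> v) = \<psi> a + \<psi> b"
        using ab_V by simp
      finally show ?thesis
        using ker j(1) by metis
    qed
    then have "p dvd \<psi> (gV i)"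
      using vertex_weights_zero_mod_if_edge_sums_zero[OF p _ conn cyc vs0] gV \<open>i < m\<close>
      unfolding bij_betw_def by blast
    then show "p dvd \<phi> i"
      using gV \<open>i < m\<close> unfolding \<psi>_def bij_betw_def by (simp add: inv_into_f_f)
  qed
  then have ker: "kernel_trivial_mod p m (\<lambda>i j. t j i)"
    by (rule kernel_trivial_mod_transpose[OF p(1)])
  have "p dvd (\<Sum>j<m. t j i * Y (gH j))" if "i < m" for i
  proof -
    have "(\<Sum>j<m. t j i * Y (gH j)) = (\<Sum>j<m. if gV i \<in> gH j then Y (gH j) else 0)"
      unfolding t_def by (intro sum.cong) auto
    also have "\<dots> = (\<Sum>e\<in>H. if gV i \<in> e then Y e else 0)"
      by (rule sum.reindex_bij_betw[OF gH])
    also have "\<dots> = (\<Sum>e \<in> {e \<in> H. gV i \<in> e}. Y e)"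
      using H(1) by (simp add: sum.inter_filter)
    finally show ?thesis
      using sums gV that unfolding bij_betw_def by auto
  qed
  then have "p dvd Y (gH j)" if "j < m" for j
    using ker[unfolded kernel_trivial_mod_def, rule_format, of "\<lambda>j. Y (gH j)"] that by blast
  then show ?thesis
    using gH \<open>e \<in> H\<close> unfolding bij_betw_def by auto
qed


lemma odd_cycle_not_two_colourable:
  assumes cyc: "is_cycle H vs" "odd (length vs)"
    and colour: "\<And>a b. {a, b} \<in> H \<Longrightarrow> a \<in> U \<longleftrightarrow> b \<notin> U"
  shows False
proof -
  have alternate: "vs ! i \<in> U \<longleftrightarrow> (vs ! 0 \<in> U \<longleftrightarrow> even i)" if "i < length vs" for i
    using that
  proof (induction i)
    case (Suc i)
    then have "vs ! i \<in> U \<longleftrightarrow> vs ! Suc i \<notin> U"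
      using colour[OF cycle_edge[OF cyc(1), of i]] by simp
    with Suc show ?case
      by auto
  qed simp
  define k where "k = length vs"
  have k: "k \<ge> 3" "even (k - 1)" "Suc (k - 1) = k"
    using cyc unfolding is_cycle_def k_def by auto
  then show False
    using colour[OF cycle_edge[OF cyc(1), of "k - 1"]] alternate[of "k - 1"] alternate[of 0]
    unfolding k_def by simp
qed

lemma even_subgraph_eq_empty_or_cycle:
  fixes H :: "'a set set"
  assumes V: "finite V" "V \<noteq> {}" and H: "finite H" "card H = card V"
    and H_edges: "\<And>e. e \<in> H \<Longrightarrow> \<exists>a b. a \<noteq> b \<and> a \<in> V \<and> b \<in> V \<and> e = {a, b}"
    and conn: "spanning_connected V H" and cyc: "is_cycle H vs"
    and Z: "Z \<subseteq> H" and even_degree: "\<And>v. v \<in> V \<Longrightarrow> even (card {e \<in> Z. v \<in> e})"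
  shows "Z = {} \<or> Z = cycle_edges vs"
proof -
  define boundary where "boundary = odd_incident (\<lambda>e v. v \<in> e) V"
  define K where "K = {X \<in> Pow H. boundary X = {}}"
  have hom: "boundary (symdiff X Y) = symdiff (boundary X) (boundary Y)" if "X \<subseteq> H" "Y \<subseteq> H" for X Y
    unfolding boundary_def using that H(1) by (intro odd_incident_symdiff) (auto intro: finite_subset)
  have "symdiff {y} {z} \<in> boundary ` Pow H" if "(y, z) \<in> {(x, y). {x, y} \<in> H}" for y z
  proof -
    have yz: "{y, z} \<in> H" "y \<noteq> z" "y \<in> V" "z \<in> V"
      using that H_edges[of "{y, z}"] by (auto simp: doubleton_eq_iff)
    have "card {e \<in> {{y, z}}. v \<in> e} = (if v \<in> {y, z} then 1 else 0)" for v
      by (rule card_filter_singleton)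
    then have "boundary {{y, z}} = symdiff {y} {z}"
      using yz unfolding boundary_def odd_incident_def symdiff_def by auto
    then show ?thesis
      using yz(1) by (metis Pow_iff empty_subsetI image_eqI insert_subset)
  qed
  then have pairs: "symdiff {u} {w} \<in> boundary ` Pow H" if "u \<in> V" "w \<in> V" for u w
    using symdiff_in_image_if_rtrancl[OF hom _ spanning_connected_rtrancl[OF conn that]] by blast
  have "card K * 2 ^ card V \<le> 2 * 2 ^ card H"
    unfolding K_def by (rule card_kernel_bound[OF H(1) V hom pairs])
  then have "card K \<le> 2"
    using H(2) by simp
  moreover have "{Z, {}, cycle_edges vs} \<subseteq> K"
    using Z even_degree cycle_edges_subset[OF cyc] even_degree_cycle_edges[of vs] cyc
    unfolding K_def boundary_def odd_incident_def is_cycle_def by auto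
  moreover have "cycle_edges vs \<noteq> {}"
    using card_cycle_edges[of vs] cyc unfolding is_cycle_def by auto
  ultimately show ?thesis
    using card_mono[of K "{Z, {}, cycle_edges vs}"] H(1) unfolding K_def
    by (cases "Z = {} \<or> Z = cycle_edges vs") (auto simp: card_insert_if split: if_splits)
qed

section \<open>Oriented triangulations of the sphere\<close>

locale sphere_triangulation =
  fixes V :: "'a set" and F :: "('a \<times> 'a \<times> 'a) set"
  assumes sphere: "oriented_sphere_triangulation V F"
begin

abbreviation "edges \<equiv> tri_edges F"

definition apex :: "'a \<Rightarrow> 'a \<Rightarrow> 'a" where
  "apex a b = (THE c. (a, b, c) \<in> F)"

lemma finite_V: "finite V" using sphere unfolding oriented_sphere_triangulation_def by blast
lemma V_nonempty: "V \<noteq> {}" using sphere unfolding oriented_sphere_triangulation_def by blast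
lemma F_subset: "F \<subseteq> V \<times> V \<times> V" using sphere unfolding oriented_sphere_triangulation_def by blast
lemma face_rotate: "(a,b,c)\<in>F \<Longrightarrow> (b,c,a)\<in>F" using sphere unfolding oriented_sphere_triangulation_def by blast
lemma face_distinct: "(a,b,c)\<in>F \<Longrightarrow> a\<noteq>b \<and> b\<noteq>c \<and> a\<noteq>c" using sphere unfolding oriented_sphere_triangulation_def by blast
lemma face_not_reversed: "(a,b,c)\<in>F \<Longrightarrow> (a,c,b) \<notin> F" using sphere unfolding oriented_sphere_triangulation_def by blast
lemma ex1_apex: "{a,b}\<in>edges \<Longrightarrow> \<exists>!c. (a,b,c)\<in>F" using sphere unfolding oriented_sphere_triangulation_def by blast
lemma vertex_in_face: "v\<in>V \<Longrightarrow> \<exists>b c. (v,b,c)\<in>F" using sphere unfolding oriented_sphere_triangulation_def by blast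
lemma link_connected: "v\<in>V \<Longrightarrow> {v,a}\<in>edges \<Longrightarrow> {v,b}\<in>edges \<Longrightarrow> (a,b) \<in> ({(x,y). (v,x,y)\<in>F})\<^sup>*"
  using sphere unfolding oriented_sphere_triangulation_def by blast
lemma edge_connected: "u\<in>V \<Longrightarrow> w\<in>V \<Longrightarrow> (u,w) \<in> ({(x,y). {x,y}\<in>edges})\<^sup>*"
  using sphere unfolding oriented_sphere_triangulation_def by blast
lemma euler_oriented: "int (card V) - int (card edges) + int (card F div 3) = 2"
  using sphere unfolding oriented_sphere_triangulation_def by blast

lemma finite_F: "finite F" using finite_V F_subset by (meson finite_SigmaI finite_subset)
lemma edges_image: "edges = (\<lambda>(a,b,c). {a,b}) ` F" unfolding tri_edges_def by force
lemma finite_edges: "finite edges" using finite_F edges_image by simp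

lemma face_rotate2: "(a,b,c)\<in>F \<Longrightarrow> (c,a,b)\<in>F" using face_rotate by blast
lemma face_in_V: "(a,b,c)\<in>F \<Longrightarrow> a\<in>V \<and> b\<in>V \<and> c\<in>V" using F_subset by auto

lemma face_edge: "(a,b,c)\<in>F \<Longrightarrow> {a,b}\<in>edges" unfolding tri_edges_def by blast
lemma face_edges_in: "(a,b,c)\<in>F \<Longrightarrow> {a,b}\<in>edges \<and> {b,c}\<in>edges \<and> {c,a}\<in>edges"
  using face_edge face_rotate by blast
lemma edgeE: "e\<in>edges \<Longrightarrow> \<exists>a b c. (a,b,c)\<in>F \<and> e = {a,b}" unfolding tri_edges_def by blast

lemma edge_doubleton:
  assumes "e \<in> edges"
  shows "\<exists>a b. a \<noteq> b \<and> a \<in> V \<and> b \<in> V \<and> e = {a, b}"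
proof -
  obtain a b c where "(a, b, c) \<in> F" "e = {a, b}"
    using edgeE[OF assms] by blast
  then show ?thesis
    using face_distinct face_in_V by blast
qed

lemma apex_eq: "(a,b,c)\<in>F \<Longrightarrow> apex a b = c"
proof -
  assume h: "(a,b,c)\<in>F"
  have "\<exists>!c. (a,b,c)\<in>F" using ex1_apex[OF face_edge[OF h]] .
  thus ?thesis unfolding apex_def by (rule the1_equality) (rule h)
qed
lemma apex_face: "{a,b}\<in>edges \<Longrightarrow> (a,b,apex a b)\<in>F"
proof -
  assume h: "{a,b}\<in>edges"
  obtain c where "(a,b,c)\<in>F" using ex1_apex[OF h] by blast
  thus ?thesis using apex_eq by simp
qed
lemma edge_commute: "{a,b}\<in>edges \<Longrightarrow> {b,a}\<in>edges" by (simp add: insert_commute)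

lemma apex_swap_ne: assumes "{a,b}\<in>edges" shows "apex a b \<noteq> apex b a"
proof
  assume e: "apex a b = apex b a"
  have "(a,b,apex a b)\<in>F" using apex_face assms by blast
  moreover have "(b,a,apex a b)\<in>F" using apex_face[OF edge_commute[OF assms]] e by simp
  hence "(a,apex a b,b)\<in>F" using face_rotate by blast
  ultimately show False using face_not_reversed by blast
qed

lemma Eentry_follows_iff: assumes E: "{a,b}\<in>edges"
  shows "(\<exists>a' b' c'. (a',b',c')\<in>F \<and> {a,b} = {a',b'} \<and> e' = {b',c'})
      \<longleftrightarrow> (e' = {b, apex a b} \<or> e' = {a, apex b a})"
proof
  assume "\<exists>a' b' c'. (a',b',c')\<in>F \<and> {a,b} = {a',b'} \<and> e' = {b',c'}"
  then obtain a' b' c' where h: "(a',b',c')\<in>F" "{a,b} = {a',b'}" "e' = {b',c'}" by blast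
  from h(2) have "(a=a' \<and> b=b') \<or> (a=b' \<and> b=a')" by (simp add: doubleton_eq_iff)
  thus "e' = {b, apex a b} \<or> e' = {a, apex b a}"
    using h apex_eq by blast
next
  assume "e' = {b, apex a b} \<or> e' = {a, apex b a}"
  thus "\<exists>a' b' c'. (a',b',c')\<in>F \<and> {a,b} = {a',b'} \<and> e' = {b',c'}"
  proof
    assume "e' = {b, apex a b}" thus ?thesis using apex_face[OF E] by blast
  next
    assume "e' = {a, apex b a}" thus ?thesis using apex_face[OF edge_commute[OF E]]
      by (metis insert_commute)
  qed
qed

lemma Eentry_precedes_iff: assumes E: "{a,b}\<in>edges"
  shows "(\<exists>a' b' c'. (a',b',c')\<in>F \<and> {a,b} = {b',c'} \<and> e' = {a',b'})
      \<longleftrightarrow> (e' = {apex a b, a} \<or> e' = {apex b a, b})"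
proof
  assume "\<exists>a' b' c'. (a',b',c')\<in>F \<and> {a,b} = {b',c'} \<and> e' = {a',b'}"
  then obtain a' b' c' where h: "(a',b',c')\<in>F" "{a,b} = {b',c'}" "e' = {a',b'}" by blast
  from h(2) have "(a=b' \<and> b=c') \<or> (a=c' \<and> b=b')" by (simp add: doubleton_eq_iff)
  moreover have "(b',c',a')\<in>F" using face_rotate h(1) by blast
  ultimately show "e' = {apex a b, a} \<or> e' = {apex b a, b}"
    using h apex_eq by blast
next
  assume "e' = {apex a b, a} \<or> e' = {apex b a, b}"
  thus "\<exists>a' b' c'. (a',b',c')\<in>F \<and> {a,b} = {b',c'} \<and> e' = {a',b'}"
  proof
    assume "e' = {apex a b, a}" thus ?thesis using face_rotate2[OF apex_face[OF E]] by blast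
  next
    assume "e' = {apex b a, b}" thus ?thesis using face_rotate2[OF apex_face[OF edge_commute[OF E]]]
      by (metis insert_commute)
  qed
qed

lemma diamond_distinct: assumes E: "{a,b}\<in>edges"
  shows "a \<noteq> b" "apex a b \<noteq> a" "apex a b \<noteq> b" "apex b a \<noteq> a" "apex b a \<noteq> b"
    "apex a b \<noteq> apex b a"
  using face_distinct[OF apex_face[OF E]] face_distinct[OF apex_face[OF edge_commute[OF E]]] apex_swap_ne[OF E] by auto

lemma Eentry_edge: assumes E: "{a,b}\<in>edges"
  shows "Eentry F {a,b} e' =
    (if e' = {b, apex a b} \<or> e' = {a, apex b a} then -1
     else if e' = {apex a b, a} \<or> e' = {apex b a, b} then 1 else 0)"
  unfolding Eentry_def Eentry_follows_iff[OF E] Eentry_precedes_iff[OF E] by simp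

text \<open>The two faces on the edge ab form the quadrilateral a, d, b, c with c = apex a b and
  d = apex b a; a row of E picks up the four sides of this diamond.\<close>

definition diamond :: "('a set \<Rightarrow> int) \<Rightarrow> 'a \<Rightarrow> 'a \<Rightarrow> int" where
  "diamond X a b = X {apex a b, a} + X {apex b a, b} - X {b, apex a b} - X {a, apex b a}"

lemma sum_Eentry_edge: assumes E: "{a,b}\<in>edges"
  shows "(\<Sum>e'\<in>edges. Eentry F {a,b} e' * X e') = diamond X a b"
proof -
  define c where "c = apex a b"
  define d where "d = apex b a"
  have ds: "a \<noteq> b" "c \<noteq> a" "c \<noteq> b" "d \<noteq> a" "d \<noteq> b" "c \<noteq> d"
    using diamond_distinct[OF E] unfolding c_def d_def by auto
  have q: "{c,a}\<in>edges" "{d,b}\<in>edges" "{b,c}\<in>edges" "{a,d}\<in>edges"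
    using face_edges_in[OF apex_face[OF E]] face_edges_in[OF apex_face[OF edge_commute[OF E]]]
    unfolding c_def d_def by (auto simp: insert_commute)
  have nq: "{c,a} \<noteq> {d,b}" "{c,a} \<noteq> {b,c}" "{c,a} \<noteq> {a,d}" "{d,b} \<noteq> {b,c}"
    "{d,b} \<noteq> {a,d}" "{b,c} \<noteq> {a,d}"
    using ds by (auto simp: doubleton_eq_iff)
  have pt: "Eentry F {a,b} e' * X e' =
     (if e' = {c,a} then X {c,a} else 0) + (if e' = {d,b} then X {d,b} else 0)
     - (if e' = {b,c} then X {b,c} else 0) - (if e' = {a,d} then X {a,d} else 0)" for e'
    unfolding Eentry_edge[OF E] c_def[symmetric] d_def[symmetric] using nq by auto
  have "(\<Sum>e'\<in>edges. Eentry F {a,b} e' * X e') =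
     (\<Sum>e'\<in>edges. (if e' = {c,a} then X {c,a} else 0)) + (\<Sum>e'\<in>edges. (if e' = {d,b} then X {d,b} else 0))
     - (\<Sum>e'\<in>edges. (if e' = {b,c} then X {b,c} else 0)) - (\<Sum>e'\<in>edges. (if e' = {a,d} then X {a,d} else 0))"
    unfolding pt by (simp add: sum.distrib sum_subtractf)
  also have "\<dots> = diamond X a b"
    unfolding diamond_def c_def[symmetric] d_def[symmetric] using q finite_edges by (simp add: sum.delta')
  finally show ?thesis .
qed


lemma Eentry_cases_disjoint: assumes E: "e\<in>edges"
  shows "\<not> ((\<exists>a' b' c'. (a',b',c')\<in>F \<and> e = {a',b'} \<and> e' = {b',c'}) \<and>
            (\<exists>a' b' c'. (a',b',c')\<in>F \<and> e = {b',c'} \<and> e' = {a',b'}))"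
proof -
  obtain a b c where abc: "(a,b,c)\<in>F" "e = {a,b}" using edgeE[OF E] by blast
  have E': "{a,b}\<in>edges" using E abc by simp
  have ds: "a \<noteq> b" "apex a b \<noteq> a" "apex a b \<noteq> b" "apex b a \<noteq> a" "apex b a \<noteq> b"
    "apex a b \<noteq> apex b a" using diamond_distinct[OF E'] by auto
  show ?thesis unfolding abc(2)
  proof
    assume h: "(\<exists>a' b' c'. (a',b',c')\<in>F \<and> {a,b} = {a',b'} \<and> e' = {b',c'}) \<and>
            (\<exists>a' b' c'. (a',b',c')\<in>F \<and> {a,b} = {b',c'} \<and> e' = {a',b'})"
    have "e' = {b, apex a b} \<or> e' = {a, apex b a}" using Eentry_follows_iff[OF E', THEN iffD1, OF conjunct1[OF h]] .
    moreover have "e' = {apex a b, a} \<or> e' = {apex b a, b}" using Eentry_precedes_iff[OF E', THEN iffD1, OF conjunct2[OF h]] .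
    moreover have "{b, apex a b} \<noteq> {apex a b, a}" "{b, apex a b} \<noteq> {apex b a, b}"
      "{a, apex b a} \<noteq> {apex a b, a}" "{a, apex b a} \<noteq> {apex b a, b}"
    proof -
      define c where "c = apex a b"
      define d where "d = apex b a"
      have "a \<noteq> b" "c \<noteq> a" "c \<noteq> b" "d \<noteq> a" "d \<noteq> b" "c \<noteq> d" using ds unfolding c_def d_def by auto
      hence "{b, c} \<noteq> {c, a}" "{b, c} \<noteq> {d, b}" "{a, d} \<noteq> {c, a}" "{a, d} \<noteq> {d, b}"
        by (auto simp: doubleton_eq_iff)
      thus "{b, apex a b} \<noteq> {apex a b, a}" "{b, apex a b} \<noteq> {apex b a, b}"
      "{a, apex b a} \<noteq> {apex a b, a}" "{a, apex b a} \<noteq> {apex b a, b}" unfolding c_def d_def .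
    qed
    ultimately show False by metis
  qed
qed

lemma Eentry_skew: assumes "e\<in>edges" shows "Eentry F e' e = - Eentry F e e'"
proof -
  define P where "P = (\<exists>a' b' c'. (a',b',c')\<in>F \<and> e = {a',b'} \<and> e' = {b',c'})"
  define Q where "Q = (\<exists>a' b' c'. (a',b',c')\<in>F \<and> e = {b',c'} \<and> e' = {a',b'})"
  have d: "\<not> (P \<and> Q)" using Eentry_cases_disjoint[OF assms, of e'] unfolding P_def Q_def .
  have 1: "(\<exists>a b c. (a,b,c)\<in>F \<and> e' = {a,b} \<and> e = {b,c}) = Q" unfolding Q_def by blast
  have 2: "(\<exists>a b c. (a,b,c)\<in>F \<and> e' = {b,c} \<and> e = {a,b}) = P" unfolding P_def by blast
  have 3: "Eentry F e e' = (if P then -1 else if Q then 1 else 0)" unfolding Eentry_def P_def Q_def ..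
  have 4: "Eentry F e' e = (if Q then -1 else if P then 1 else 0)" unfolding Eentry_def 1 2 ..
  show ?thesis unfolding 3 4 using d by auto
qed

definition Emult :: "('a set \<Rightarrow> int) \<Rightarrow> 'a set \<Rightarrow> int" where
  "Emult X e = (\<Sum>e'\<in>edges. Eentry F e e' * X e')"

lemma Emult_edge: "{a,b}\<in>edges \<Longrightarrow> Emult X {a,b} = diamond X a b"
  unfolding Emult_def by (rule sum_Eentry_edge)

lemma sum_kernel_times_Emult: assumes W: "\<forall>e'\<in>edges. Emult W e' = 0"
  shows "(\<Sum>e\<in>edges. W e * Emult X e) = 0"
proof -
  have "(\<Sum>e\<in>edges. W e * Emult X e) = (\<Sum>e\<in>edges. \<Sum>e'\<in>edges. W e * (Eentry F e e' * X e'))"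
    unfolding Emult_def by (simp add: sum_distrib_left)
  also have "\<dots> = (\<Sum>e'\<in>edges. \<Sum>e\<in>edges. W e * (Eentry F e e' * X e'))"
    by (rule sum.swap)
  also have "\<dots> = (\<Sum>e'\<in>edges. - (X e' * Emult W e'))"
  proof (rule sum.cong[OF refl])
    fix e' assume e': "e' \<in> edges"
    have "(\<Sum>e\<in>edges. W e * (Eentry F e e' * X e')) = (\<Sum>e\<in>edges. - (X e' * (Eentry F e' e * W e)))"
      by (rule sum.cong[OF refl]) (simp add: Eentry_skew[OF e'])
    also have "\<dots> = - (X e' * Emult W e')" unfolding Emult_def by (simp add: sum_negf sum_distrib_left)
    finally show "(\<Sum>e\<in>edges. W e * (Eentry F e e' * X e')) = - (X e' * Emult W e')" .
  qed
  also have "\<dots> = 0" using W by simp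
  finally show ?thesis .
qed

lemma Emult_star_eq_0: "\<forall>e'\<in>edges. Emult (\<lambda>e. if v \<in> e then 1 else 0) e' = 0"
proof
  fix e' assume e': "e'\<in>edges"
  obtain a b c where abc: "(a,b,c)\<in>F" "e' = {a,b}" using edgeE[OF e'] by blast
  have E': "{a,b}\<in>edges" using e' abc by simp
  have ds: "a \<noteq> b" "apex a b \<noteq> a" "apex a b \<noteq> b" "apex b a \<noteq> a" "apex b a \<noteq> b"
    "apex a b \<noteq> apex b a" using diamond_distinct[OF E'] by auto
  show "Emult (\<lambda>e. if v \<in> e then 1 else 0) e' = 0"
    unfolding abc(2) Emult_edge[OF E'] diamond_def using ds by auto
qed

lemma Emult_one_eq_0: "\<forall>e'\<in>edges. Emult (\<lambda>e. 1) e' = 0"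
proof
  fix e' assume e': "e'\<in>edges"
  obtain a b c where abc: "(a,b,c)\<in>F" "e' = {a,b}" using edgeE[OF e'] by blast
  have E': "{a,b}\<in>edges" using e' abc by simp
  show "Emult (\<lambda>e. 1) e' = 0" unfolding abc(2) Emult_edge[OF E'] diamond_def by simp
qed

lemma sum_star_Emult: "(\<Sum>e\<in>{e\<in>edges. v \<in> e}. Emult X e) = 0"
proof -
  have "(\<Sum>e\<in>{e\<in>edges. v \<in> e}. Emult X e) = (\<Sum>e\<in>edges. (if v \<in> e then 1 else 0) * Emult X e)"
  proof -
    have "(\<Sum>e\<in>{e\<in>edges. v \<in> e}. Emult X e) = (\<Sum>e\<in>edges. if v \<in> e then Emult X e else 0)"
      using finite_edges by (simp add: sum.inter_filter)
    also have "\<dots> = (\<Sum>e\<in>edges. (if v \<in> e then 1 else 0) * Emult X e)" by (rule sum.cong) auto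
    finally show ?thesis .
  qed
  also have "\<dots> = 0" by (rule sum_kernel_times_Emult[OF Emult_star_eq_0])
  finally show ?thesis .
qed

lemma sum_Emult: "(\<Sum>e\<in>edges. Emult X e) = 0"
  using sum_kernel_times_Emult[OF Emult_one_eq_0, of X] by simp

definition corner :: "('a set \<Rightarrow> int) \<Rightarrow> 'a \<Rightarrow> 'a \<Rightarrow> 'a \<Rightarrow> int" where
  "corner X a x y = X {a,x} + X {y,a} - X {x,y}"

lemma corner_step: assumes "(a,x,y)\<in>F" "(a,y,z)\<in>F" shows "corner X a x y - corner X a y z = - Emult X {a,y}"
proof -
  have E: "{a,y}\<in>edges" using face_edges_in[OF assms(2)] by blast
  have "apex a y = z" using apex_eq assms(2) by blast
  moreover have "apex y a = x" using apex_eq face_rotate[OF face_rotate[OF assms(1)]] by blast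
  ultimately show ?thesis unfolding Emult_edge[OF E] diamond_def corner_def by (simp add: insert_commute)
qed

text \<open>If EX vanishes modulo p, the corner sum X{a,x} + X{y,a} - X{x,y} of a face (a,x,y) at a does
  not depend on the face (consecutive faces around a differ by (EX){a,y}), and the two corner sums
  of a face at the ends of an edge add up to 2 X{a,b}.\<close>

lemma potential_mod:
  assumes h: "\<forall>e\<in>edges. (p::int) dvd Emult X e"
  shows "\<exists>\<psi>. \<forall>a b. {a,b}\<in>edges \<longrightarrow> p dvd 2 * X{a,b} - \<psi> a - \<psi> b"
proof -
  define x0 where "x0 a = (SOME x. \<exists>y. (a,x,y)\<in>F)" for a
  define \<psi> where "\<psi> a = corner X a (x0 a) (apex a (x0 a))" for a
  have face_pot: "p dvd corner X a x y - \<psi> a" if f: "(a,x,y)\<in>F" for a x y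
  proof -
    have aV: "a\<in>V" using face_in_V f by blast
    have "\<exists>x y. (a,x,y)\<in>F" using f by blast
    hence "\<exists>y. (a, x0 a, y)\<in>F" unfolding x0_def by (metis (mono_tags, lifting) someI_ex)
    then obtain y0 where y0: "(a, x0 a, y0)\<in>F" by blast
    have e0: "{a, x0 a}\<in>edges" using face_edges_in[OF y0] by blast
    have e1: "{a, x}\<in>edges" using face_edges_in[OF f] by blast
    have "(x0 a, x) \<in> ({(u,w). (a,u,w)\<in>F})\<^sup>*" using link_connected[OF aV e0 e1] .
    hence "{a,x}\<in>edges \<longrightarrow> p dvd corner X a x (apex a x) - \<psi> a"
    proof (induction rule: rtrancl_induct)
      case base show ?case unfolding \<psi>_def by simp
    next
      case (step u w)
      have uw: "(a,u,w)\<in>F" using step(2) by simp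
      have ou: "apex a u = w" using apex_eq uw by blast
      have ew: "{a,w}\<in>edges" using face_edges_in[OF uw] by (simp add: insert_commute)
      have f2: "(a,w,apex a w)\<in>F" using apex_face[OF ew] .
      have eu: "{a,u}\<in>edges" using face_edges_in[OF uw] by blast
      have "p dvd corner X a u (apex a u) - \<psi> a" using step(3) eu by simp
      moreover have "p dvd corner X a u w - corner X a w (apex a w)"
        using corner_step[OF uw f2] h ew by simp
      ultimately have "p dvd (corner X a u w - \<psi> a) - (corner X a u w - corner X a w (apex a w))"
        using ou by (metis dvd_diff)
      thus ?case by simp
    qed
    thus ?thesis using e1 apex_eq[OF f] by simp
  qed
  have "p dvd 2 * X{a,b} - \<psi> a - \<psi> b" if E: "{a,b}\<in>edges" for a b
  proof -
    define c where "c = apex a b"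
    have f1: "(a,b,c)\<in>F" unfolding c_def by (rule apex_face[OF E])
    have f2: "(b,c,a)\<in>F" using face_rotate[OF f1] .
    have "p dvd (corner X a b c - \<psi> a) + (corner X b c a - \<psi> b)"
      using face_pot[OF f1] face_pot[OF f2] by simp
    moreover have "corner X a b c + corner X b c a = 2 * X{a,b}" unfolding corner_def by (simp add: insert_commute)
    ultimately show ?thesis by (simp add: algebra_simps)
  qed
  thus ?thesis by blast
qed

end

context sphere_triangulation begin

definition faces :: "'a set set" where "faces = (\<lambda>(a,b,c). {a,b,c}) ` F"

lemma faceI: "(a,b,c)\<in>F \<Longrightarrow> {a,b,c}\<in>faces" unfolding faces_def by force
lemma facesE: "t\<in>faces \<Longrightarrow> \<exists>a b c. (a,b,c)\<in>F \<and> t = {a,b,c}" unfolding faces_def by auto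
lemma finite_faces: "finite faces" unfolding faces_def using finite_F by simp

lemma pair_cases:
  assumes "a \<in> {x,y,z}" "b \<in> {x,y,z}" "a \<noteq> b"
  obtains "a=x" "b=y" | "a=y" "b=z" | "a=z" "b=x" | "a=y" "b=x" | "a=z" "b=y" | "a=x" "b=z"
  using assms by auto

lemma edges_in_face: assumes f: "(a,b,c)\<in>F"
  shows "{e\<in>edges. e \<subseteq> {a,b,c}} = {{a,b},{b,c},{c,a}}"
proof
  show "{{a,b},{b,c},{c,a}} \<subseteq> {e\<in>edges. e \<subseteq> {a,b,c}}" using face_edges_in[OF f] by auto
  show "{e\<in>edges. e \<subseteq> {a,b,c}} \<subseteq> {{a,b},{b,c},{c,a}}"
  proof
    fix e assume e: "e \<in> {e\<in>edges. e \<subseteq> {a,b,c}}"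
    then obtain x y z where xyz: "(x,y,z)\<in>F" "e = {x,y}" using edgeE by blast
    have xy: "x \<noteq> y" using face_distinct[OF xyz(1)] by simp
    have "x \<in> {a,b,c}" "y \<in> {a,b,c}" using e xyz(2) by auto
    thus "e \<in> {{a,b},{b,c},{c,a}}"
      by (rule pair_cases[OF _ _ xy]) (auto simp: xyz(2) insert_commute)
  qed
qed

lemma face_edges_distinct: assumes f: "(a,b,c)\<in>F"
  shows "{a,b} \<noteq> {b,c}" "{a,b} \<noteq> {c,a}" "{b,c} \<noteq> {c,a}"
  using face_distinct[OF f] by (auto simp: doubleton_eq_iff)

lemma faces_of_edge: assumes E: "{a,b}\<in>edges"
  shows "{t\<in>faces. {a,b} \<subseteq> t} = {{a,b,apex a b},{a,b,apex b a}}"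
proof
  show "{{a,b,apex a b},{a,b,apex b a}} \<subseteq> {t\<in>faces. {a,b} \<subseteq> t}"
  proof -
    have 1: "{a,b,apex a b} \<in> faces" by (rule faceI[OF apex_face[OF E]])
    have "{b,a,apex b a} \<in> faces" by (rule faceI[OF apex_face[OF edge_commute[OF E]]])
    moreover have "{b,a,apex b a} = {a,b,apex b a}" by (rule insert_commute)
    ultimately have 2: "{a,b,apex b a} \<in> faces" by simp
    show ?thesis
    proof
      fix t assume "t \<in> {{a,b,apex a b},{a,b,apex b a}}"
      hence "t = {a,b,apex a b} \<or> t = {a,b,apex b a}" by blast
      thus "t \<in> {t\<in>faces. {a,b} \<subseteq> t}" using 1 2 by blast
    qed
  qed
  show "{t\<in>faces. {a,b} \<subseteq> t} \<subseteq> {{a,b,apex a b},{a,b,apex b a}}"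
  proof
    fix t assume t: "t \<in> {t\<in>faces. {a,b} \<subseteq> t}"
    have tFF: "t \<in> faces" and abt: "{a,b} \<subseteq> t" using t by simp_all
    obtain x y z where xyz: "(x,y,z)\<in>F" "t = {x,y,z}" using facesE[OF tFF] by blast
    have r1: "(y,z,x)\<in>F" using face_rotate[OF xyz(1)] .
    have r2: "(z,x,y)\<in>F" using face_rotate[OF r1] .
    have ab: "a \<noteq> b" using diamond_distinct[OF E] by simp
    have "a \<in> {x,y,z}" "b \<in> {x,y,z}" using abt xyz(2) by simp_all
    hence "t = {a,b,apex a b} \<or> t = {a,b,apex b a}"
    proof (rule pair_cases[OF _ _ ab])
      assume h: "a=x" "b=y"
      hence "apex a b = z" using apex_eq[OF xyz(1)] by simp
      thus ?thesis using xyz(2) h by simp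
    next
      assume h: "a=y" "b=z"
      hence "apex a b = x" using apex_eq[OF r1] by simp
      moreover have "{x,y,z} = {y,z,x}" by blast
      ultimately show ?thesis using xyz(2) h by simp
    next
      assume h: "a=z" "b=x"
      hence "apex a b = y" using apex_eq[OF r2] by simp
      moreover have "{x,y,z} = {z,x,y}" by blast
      ultimately show ?thesis using xyz(2) h by simp
    next
      assume h: "a=y" "b=x"
      hence "apex b a = z" using apex_eq[OF xyz(1)] by simp
      moreover have "{x,y,z} = {y,x,z}" by blast
      ultimately show ?thesis using xyz(2) h by simp
    next
      assume h: "a=z" "b=y"
      hence "apex b a = x" using apex_eq[OF r1] by simp
      moreover have "{x,y,z} = {z,y,x}" by blast
      ultimately show ?thesis using xyz(2) h by simp
    next
      assume h: "a=x" "b=z"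
      hence "apex b a = y" using apex_eq[OF r2] by simp
      moreover have "{x,y,z} = {x,z,y}" by blast
      ultimately show ?thesis using xyz(2) h by simp
    qed
    thus "t \<in> {{a,b,apex a b},{a,b,apex b a}}" by blast
  qed
qed

lemma faces_of_edge_ne: assumes E: "{a,b}\<in>edges"
  shows "{a,b,apex a b} \<noteq> {a,b,apex b a}"
proof
  assume h: "{a,b,apex a b} = {a,b,apex b a}"
  have ds: "apex a b \<noteq> a" "apex a b \<noteq> b" "apex a b \<noteq> apex b a" using diamond_distinct[OF E] by auto
  have "apex a b \<in> {a,b,apex b a}" using h by blast
  thus False using ds by auto
qed

lemma same_face: assumes "(x,y,z)\<in>F" "(x,b,c)\<in>F" "{x,y,z} = {x,b,c}"
  shows "y = b \<and> z = c"
proof -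
  have d1: "x \<noteq> y" "y \<noteq> z" "x \<noteq> z" and d2: "x \<noteq> b" "b \<noteq> c" "x \<noteq> c" using face_distinct assms(1,2) by blast+
  have "y \<in> {x,b,c}" "z \<in> {x,b,c}" using assms(3) by blast+
  hence yb: "y = b \<or> y = c" and zb: "z = b \<or> z = c" using d1 by auto
  show ?thesis
  proof (cases "y = b")
    case True thus ?thesis using apex_eq assms(1,2) by metis
  next
    case False
    hence "y = c" "z = b" using yb zb d1 by auto
    thus ?thesis using face_not_reversed assms(1,2) by blast
  qed
qed

lemma oriented_faces_of: assumes f: "(a,b,c)\<in>F"
  shows "{p\<in>F. (\<lambda>(x,y,z). {x,y,z}) p = {a,b,c}} = {(a,b,c),(b,c,a),(c,a,b)}"
proof
  have r1: "(b,c,a)\<in>F" and r2: "(c,a,b)\<in>F" using face_rotate f by blast+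
  show "{(a,b,c),(b,c,a),(c,a,b)} \<subseteq> {p\<in>F. (\<lambda>(x,y,z). {x,y,z}) p = {a,b,c}}"
    using f r1 r2 by (auto simp: insert_commute)
  show "{p\<in>F. (\<lambda>(x,y,z). {x,y,z}) p = {a,b,c}} \<subseteq> {(a,b,c),(b,c,a),(c,a,b)}"
  proof
    fix p assume p: "p \<in> {p\<in>F. (\<lambda>(x,y,z). {x,y,z}) p = {a,b,c}}"
    obtain x y z where pxyz: "p = (x,y,z)" by (cases p) auto
    have xyz: "(x,y,z)\<in>F" "{x,y,z} = {a,b,c}" using p pxyz by auto
    consider "x = a" | "x = b" | "x = c" using xyz(2) by blast
    thus "p \<in> {(a,b,c),(b,c,a),(c,a,b)}"
    proof cases
      case 1
      hence "y = b \<and> z = c" using same_face[of x y z b c] xyz f by simp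
      thus ?thesis using pxyz 1 by simp
    next
      case 2
      have "{x,y,z} = {x,c,a}" using xyz(2) 2 by auto
      hence "y = c \<and> z = a" using same_face[of x y z c a] xyz(1) r1 2 by simp
      thus ?thesis using pxyz 2 by simp
    next
      case 3
      have "{x,y,z} = {x,a,b}" using xyz(2) 3 by auto
      hence "y = a \<and> z = b" using same_face[of x y z a b] xyz(1) r2 3 by simp
      thus ?thesis using pxyz 3 by simp
    qed
  qed
qed

lemma card_F_eq: "card F = 3 * card faces"
proof -
  define g :: "'a \<times> 'a \<times> 'a \<Rightarrow> 'a set" where "g = (\<lambda>(x,y,z). {x,y,z})"
  have U: "F = (\<Union>t\<in>faces. {p\<in>F. g p = t})" unfolding faces_def g_def by auto
  have "card F = card (\<Union>t\<in>faces. {p\<in>F. g p = t})" by (rule arg_cong[where f=card, OF U])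
  also have "\<dots> = (\<Sum>t\<in>faces. card {p\<in>F. g p = t})"
    by (rule card_UN_disjoint) (use finite_faces finite_F in auto)
  also have "\<dots> = (\<Sum>t\<in>faces. 3)"
  proof (rule sum.cong[OF refl])
    fix t assume "t \<in> faces"
    then obtain a b c where abc: "(a,b,c)\<in>F" "t = {a,b,c}" using facesE by blast
    have "{p\<in>F. g p = t} = {(a,b,c),(b,c,a),(c,a,b)}" using oriented_faces_of[OF abc(1)] abc(2) unfolding g_def by simp
    moreover have "card {(a,b,c),(b,c,a),(c,a,b)} = 3" using face_distinct[OF abc(1)] by auto
    ultimately show "card {p\<in>F. g p = t} = 3" by simp
  qed
  finally show ?thesis by simp
qed

lemma euler: "card edges + 2 = card V + card faces"
  using euler_oriented card_F_eq by simp

lemma faces_invariant: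
  assumes inv: "\<And>a b. {a,b}\<in>edges \<Longrightarrow> Q {a,b,apex a b} = Q {a,b,apex b a}"
    and t: "t\<in>faces" and t': "t'\<in>faces"
  shows "Q t = Q t'"
proof -
  have atv: "Q {v,x,y} = Q {v,x',y'}" if f1: "(v,x,y)\<in>F" and f2: "(v,x',y')\<in>F" for v x y x' y'
  proof -
    have vV: "v\<in>V" using face_in_V f1 by blast
    have e1: "{v,x}\<in>edges" and e2: "{v,x'}\<in>edges" using face_edges_in f1 f2 by blast+
    have "(x, x') \<in> ({(u,w). (v,u,w)\<in>F})\<^sup>*" using link_connected[OF vV e1 e2] .
    hence "Q {v,x,apex v x} = Q {v,x',apex v x'}"
    proof (induction rule: rtrancl_induct)
      case base show ?case by simp
    next
      case (step u w)
      have uw: "(v,u,w)\<in>F" using step(2) by simp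
      have ou: "apex v u = w" using apex_eq[OF uw] .
      have ew: "{v,w}\<in>edges" using face_edges_in[OF uw] by (simp add: insert_commute)
      have ow: "apex w v = u" using apex_eq face_rotate[OF face_rotate[OF uw]] by blast
      have "Q {v,w,apex v w} = Q {v,w,apex w v}" using inv[OF ew] .
      also have "{v,w,apex w v} = {v,u,apex v u}" using ou ow by (auto simp: insert_commute)
      finally show ?case using step(3) by simp
    qed
    thus ?thesis using apex_eq[OF f1] apex_eq[OF f2] by simp
  qed
  define q where "q v = Q {v, SOME x. \<exists>y. (v,x,y)\<in>F, apex v (SOME x. \<exists>y. (v,x,y)\<in>F)}" for v
  have qv: "Q {v,x,y} = q v" if f: "(v,x,y)\<in>F" for v x y
  proof -
    have "\<exists>x y. (v,x,y)\<in>F" using f by blast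
    hence "\<exists>y. (v, SOME x. \<exists>y. (v,x,y)\<in>F, y)\<in>F" by (rule someI_ex)
    then obtain y0 where y0: "(v, SOME x. \<exists>y. (v,x,y)\<in>F, y0)\<in>F" by blast
    have "apex v (SOME x. \<exists>y. (v,x,y)\<in>F) = y0" using apex_eq[OF y0] .
    thus ?thesis unfolding q_def using atv[OF f y0] by simp
  qed
  have qc: "q u = q w" if u: "u\<in>V" and w: "w\<in>V" for u w
  proof -
    have "(u,w) \<in> ({(x,y). {x,y}\<in>edges})\<^sup>*" using edge_connected[OF u w] .
    thus ?thesis
    proof (induction rule: rtrancl_induct)
      case base show ?case by simp
    next
      case (step y z)
      have yz: "{y,z}\<in>edges" using step(2) by simp
      define c where "c = apex y z"
      have f: "(y,z,c)\<in>F" unfolding c_def by (rule apex_face[OF yz])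
      have f2: "(z,c,y)\<in>F" using face_rotate[OF f] .
      have "q y = Q {y,z,c}" using qv[OF f] by simp
      also have "{y,z,c} = {z,c,y}" by auto
      also have "Q {z,c,y} = q z" using qv[OF f2] .
      finally show ?case using step(3) by simp
    qed
  qed
  obtain a b c where abc: "(a,b,c)\<in>F" "t = {a,b,c}" using facesE[OF t] by blast
  obtain a' b' c' where abc': "(a',b',c')\<in>F" "t' = {a',b',c'}" using facesE[OF t'] by blast
  have "Q t = q a" using qv[OF abc(1)] abc(2) by simp
  also have "\<dots> = q a'" using qc face_in_V abc(1) abc'(1) by blast
  also have "\<dots> = Q t'" using qv[OF abc'(1)] abc'(2) by simp
  finally show ?thesis .
qed


definition cobound1 :: "'a set set \<Rightarrow> 'a set set" where "cobound1 Z = odd_incident (\<lambda>e t. e \<subseteq> t) faces Z"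
definition cobound0 :: "'a set \<Rightarrow> 'a set set" where "cobound0 U = odd_incident (\<lambda>v e. v \<in> e) edges U"

lemma card_edges_in_face: assumes f: "(a,b,c)\<in>F" and Z: "Z \<subseteq> edges"
  shows "card {e\<in>Z. e \<subseteq> {a,b,c}} =
    (if {a,b}\<in>Z then 1 else 0) + (if {b,c}\<in>Z then 1 else 0) + (if {c,a}\<in>Z then 1 else 0)"
proof -
  have "{e\<in>Z. e \<subseteq> {a,b,c}} = {e\<in>{e\<in>edges. e \<subseteq> {a,b,c}}. e \<in> Z}" using Z by auto
  also have "\<dots> = {e\<in>{{a,b},{b,c},{c,a}}. e \<in> Z}" unfolding edges_in_face[OF f] ..
  finally show ?thesis using card_filter_triple[OF face_edges_distinct[OF f], where P="\<lambda>e. e \<in> Z"] by simp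
qed

lemma cobound1_symdiff: "X \<subseteq> edges \<Longrightarrow> Y \<subseteq> edges \<Longrightarrow> cobound1 (symdiff X Y) = symdiff (cobound1 X) (cobound1 Y)"
  unfolding cobound1_def by (rule odd_incident_symdiff) (use finite_edges finite_subset in auto)

lemma cobound0_symdiff: "X \<subseteq> V \<Longrightarrow> Y \<subseteq> V \<Longrightarrow> cobound0 (symdiff X Y) = symdiff (cobound0 X) (cobound0 Y)"
  unfolding cobound0_def by (rule odd_incident_symdiff) (use finite_V finite_subset in auto)

lemma cobound1_empty: "cobound1 {} = {}"
  unfolding cobound1_def by simp

lemma cobound1_edge: assumes E: "{a,b}\<in>edges"
  shows "cobound1 {{a,b}} = symdiff {{a,b,apex a b}} {{a,b,apex b a}}"
proof -
  have c: "card {x\<in>{{a,b}}. x \<subseteq> t} = (if {a,b} \<subseteq> t then 1 else 0)" for t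
    using card_filter_singleton[where P="\<lambda>x. x \<subseteq> t" and x="{a,b}"] by simp
  have "cobound1 {{a,b}} = {t\<in>faces. {a,b} \<subseteq> t}" unfolding cobound1_def odd_incident_def c by (auto split: if_splits)
  also have "\<dots> = {{a,b,apex a b},{a,b,apex b a}}" by (rule faces_of_edge[OF E])
  also have "\<dots> = symdiff {{a,b,apex a b}} {{a,b,apex b a}}" using faces_of_edge_ne[OF E] unfolding symdiff_def by auto
  finally show ?thesis .
qed

lemma symdiff_faces_in_image: assumes t: "t\<in>faces" and t': "t'\<in>faces" shows "symdiff {t} {t'} \<in> cobound1 ` Pow edges"
proof -
  have cl: "symdiff P Q \<in> cobound1 ` Pow edges"
    if "P \<in> cobound1 ` Pow edges" "Q \<in> cobound1 ` Pow edges" for P Q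
    using symdiff_in_image[of edges cobound1, OF cobound1_symdiff that] .
  have inv: "(symdiff {{a,b,apex a b}} {t'} \<in> cobound1 ` Pow edges) = (symdiff {{a,b,apex b a}} {t'} \<in> cobound1 ` Pow edges)"
    if E: "{a,b}\<in>edges" for a b
  proof -
    define f1 where "f1 = {a,b,apex a b}"
    define f2 where "f2 = {a,b,apex b a}"
    have s12: "symdiff {f1} {f2} \<in> cobound1 ` Pow edges" using cobound1_edge[OF E] E unfolding f1_def f2_def
      by (metis Pow_iff empty_subsetI image_eqI insert_subset)
    have s21: "symdiff {f2} {f1} \<in> cobound1 ` Pow edges" using s12 by (simp add: symdiff_commute)
    have "symdiff {f1} {t'} \<in> cobound1 ` Pow edges \<Longrightarrow> symdiff {f2} {t'} \<in> cobound1 ` Pow edges"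
      using cl[OF s21] symdiff_singletons_trans[of f2 f1 t'] by metis
    moreover have "symdiff {f2} {t'} \<in> cobound1 ` Pow edges \<Longrightarrow> symdiff {f1} {t'} \<in> cobound1 ` Pow edges"
      using cl[OF s12] symdiff_singletons_trans[of f1 f2 t'] by metis
    ultimately show ?thesis unfolding f1_def f2_def by blast
  qed
  have "(symdiff {t} {t'} \<in> cobound1 ` Pow edges) = (symdiff {t'} {t'} \<in> cobound1 ` Pow edges)"
    by (rule faces_invariant[where Q="\<lambda>s. symdiff {s} {t'} \<in> cobound1 ` Pow edges", OF inv t t'])
  moreover have "symdiff {t'} {t'} \<in> cobound1 ` Pow edges" using cobound1_empty by (metis Pow_bottom image_eqI symdiff_self)
  ultimately show ?thesis by simp
qed

lemma faces_nonempty: "faces \<noteq> {}"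
proof -
  obtain v where "v\<in>V" using V_nonempty by blast
  then obtain b c where "(v,b,c)\<in>F" using vertex_in_face by blast
  thus ?thesis using faceI by blast
qed

lemma card_kernel_cobound1: "card {Z \<in> Pow edges. cobound1 Z = {}} * 2 ^ card faces \<le> 2 * 2 ^ card edges"
  by (rule card_kernel_bound[OF finite_edges finite_faces faces_nonempty cobound1_symdiff symdiff_faces_in_image])

lemma cobound0_eq_empty: assumes U: "U \<subseteq> V" and d: "cobound0 U = {}" shows "U = {} \<or> U = V"
proof -
  have ev: "(a \<in> U) = (b \<in> U)" if E: "{a,b}\<in>edges" for a b
  proof -
    have ab: "a \<noteq> b" using diamond_distinct[OF E] by simp
    have "{a,b} \<notin> cobound0 U" using d by simp
    hence "even (card {v\<in>U. v \<in> {a,b}})" using E unfolding cobound0_def odd_incident_def by simp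
    moreover have "{v\<in>U. v \<in> {a,b}} = {v\<in>{a,b}. v \<in> U}" by auto
    ultimately have "even (card {v\<in>{a,b}. v \<in> U})" by simp
    thus ?thesis using card_filter_doubleton[OF ab, where P="\<lambda>v. v \<in> U"] by (auto split: if_splits)
  qed
  obtain v0 where v0: "v0 \<in> V" using V_nonempty by blast
  have all: "(v0 \<in> U) = (w \<in> U)" if w: "w \<in> V" for w
  proof -
    have "(v0,w) \<in> ({(x,y). {x,y}\<in>edges})\<^sup>*" using edge_connected[OF v0 w] .
    thus ?thesis by (induction rule: rtrancl_induct) (use ev in auto)
  qed
  show ?thesis
  proof (cases "v0 \<in> U")
    case True hence "V \<subseteq> U" using all by blast
    thus ?thesis using U by blast
  next
    case False hence "U = {}" using all U by blast
    thus ?thesis by simp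
  qed
qed

lemma card_image_cobound0: "2 ^ card V \<le> 2 * card (cobound0 ` Pow V)"
proof -
  have hc: "card (Pow V) = card (cobound0 ` Pow V) * card {U \<in> Pow V. cobound0 U = {}}"
    by (rule card_Pow_eq_card_image_times_card_kernel[OF finite_V cobound0_symdiff])
  have "{U \<in> Pow V. cobound0 U = {}} \<subseteq> {{}, V}" using cobound0_eq_empty by blast
  hence "card {U \<in> Pow V. cobound0 U = {}} \<le> card {{}, V}" by (rule card_mono[rotated]) simp
  moreover have "card {{}, V} \<le> 2" by (cases "V = {}") auto
  ultimately have k2: "card {U \<in> Pow V. cobound0 U = {}} \<le> 2" by linarith
  have "card (cobound0 ` Pow V) * card {U \<in> Pow V. cobound0 U = {}} \<le> card (cobound0 ` Pow V) * 2"
    using k2 by (rule mult_le_mono2)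
  thus ?thesis using hc finite_V by (simp add: card_Pow)
qed


lemma edge_in_cobound0_iff: assumes E: "{a,b}\<in>edges"
  shows "{a,b} \<in> cobound0 U \<longleftrightarrow> ((a \<in> U) \<noteq> (b \<in> U))"
proof -
  have ab: "a \<noteq> b" using diamond_distinct[OF E] by simp
  have "{v\<in>U. v \<in> {a,b}} = {v\<in>{a,b}. v \<in> U}" by auto
  hence "card {v\<in>U. v \<in> {a,b}} = (if a \<in> U then 1 else 0) + (if b \<in> U then 1 else 0)"
    using card_filter_doubleton[OF ab, where P="\<lambda>v. v \<in> U"] by simp
  thus ?thesis using E unfolding cobound0_def odd_incident_def by auto
qed

lemma cobound1_cobound0: assumes U: "U \<subseteq> V" shows "cobound1 (cobound0 U) = {}"
proof -
  have "even (card {e\<in>cobound0 U. e \<subseteq> t})" if t: "t\<in>faces" for t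
  proof -
    obtain a b c where abc: "(a,b,c)\<in>F" "t = {a,b,c}" using facesE[OF t] by blast
    have E: "{a,b}\<in>edges" "{b,c}\<in>edges" "{c,a}\<in>edges" using face_edges_in[OF abc(1)] by auto
    have "card {e\<in>cobound0 U. e \<subseteq> t} =
      (if {a,b}\<in>cobound0 U then 1 else 0) + (if {b,c}\<in>cobound0 U then 1 else 0) + (if {c,a}\<in>cobound0 U then 1 else 0)"
      unfolding abc(2) by (rule card_edges_in_face[OF abc(1)]) (simp add: cobound0_def odd_incident_subset)
    thus ?thesis unfolding edge_in_cobound0_iff[OF E(1)] edge_in_cobound0_iff[OF E(2)] edge_in_cobound0_iff[OF E(3)] by auto
  qed
  thus ?thesis unfolding cobound1_def odd_incident_def by auto
qed

text \<open>The mod-2 cohomology of the sphere vanishes in degree one: cocycles are at most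
  2 ^ (|E| - |F| + 1) many, which by Euler's formula is 2 ^ (|V| - 1), the number of coboundaries.\<close>

lemma cocycle_eq_cobound0: assumes Z: "Z \<subseteq> edges" and dZ: "cobound1 Z = {}" shows "\<exists>U. U \<subseteq> V \<and> Z = cobound0 U"
proof -
  define K where "K = {Z \<in> Pow edges. cobound1 Z = {}}"
  define I where "I = cobound0 ` Pow V"
  have IK: "I \<subseteq> K"
  proof
    fix Z assume "Z \<in> I"
    then obtain U where U: "U \<subseteq> V" "Z = cobound0 U" unfolding I_def by auto
    moreover have "cobound0 U \<subseteq> edges" unfolding cobound0_def by (rule odd_incident_subset)
    ultimately show "Z \<in> K" unfolding K_def using cobound1_cobound0 by simp
  qed
  have fK: "finite K" unfolding K_def using finite_edges by simp
  have A: "card K * 2 ^ card faces \<le> 2 * 2 ^ card edges" using card_kernel_cobound1 unfolding K_def .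
  have B: "2 ^ card V \<le> 2 * card I" using card_image_cobound0 unfolding I_def .
  have C: "(4::nat) * 2 ^ card edges = 2 ^ card V * 2 ^ card faces"
  proof -
    have "(2::nat) ^ (card edges + 2) = 2 ^ (card V + card faces)" using euler by simp
    thus ?thesis by (simp add: power_add)
  qed
  have "card K * (4 * 2 ^ card faces) \<le> 4 * (2 * 2 ^ card edges)" using A by simp
  also have "\<dots> = 2 * (2 ^ card V * 2 ^ card faces)" using C by simp
  also have "\<dots> \<le> 2 * ((2 * card I) * 2 ^ card faces)" using B by simp
  also have "\<dots> = card I * (4 * 2 ^ card faces)" by simp
  finally have "card K \<le> card I" by simp
  hence "I = K" using card_seteq[OF fK IK] by simp
  moreover have "Z \<in> K" unfolding K_def using Z dZ by simp
  ultimately show ?thesis unfolding I_def by auto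
qed

lemma face_parity:
  fixes X :: "'a set \<Rightarrow> int"
  assumes dX: "\<And>a b. {a,b}\<in>edges \<Longrightarrow> even (diamond X a b)"
  shows "cobound1 {e\<in>edges. odd (X e)} = {} \<or> cobound1 (edges - {e\<in>edges. odd (X e)}) = {}"
proof -
  define Xs where "Xs = {e\<in>edges. odd (X e)}"
  have XsE: "Xs \<subseteq> edges" unfolding Xs_def by auto
  have fc: "odd (card {e\<in>Xs. e \<subseteq> {a,b,c}}) \<longleftrightarrow> odd (X{a,b} + X{b,c} + X{c,a})" if f: "(a,b,c)\<in>F" for a b c
  proof -
    have E: "{a,b}\<in>edges" "{b,c}\<in>edges" "{c,a}\<in>edges" using face_edges_in[OF f] by auto
    have "card {e\<in>Xs. e \<subseteq> {a,b,c}} =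
      (if {a,b}\<in>Xs then 1 else 0) + (if {b,c}\<in>Xs then 1 else 0) + (if {c,a}\<in>Xs then 1 else 0)"
      by (rule card_edges_in_face[OF f XsE])
    moreover have "({a,b}\<in>Xs) = odd (X{a,b})" "({b,c}\<in>Xs) = odd (X{b,c})" "({c,a}\<in>Xs) = odd (X{c,a})"
      using E unfolding Xs_def by auto
    ultimately show ?thesis by (auto split: if_splits)
  qed
  have fc2: "odd (card {e\<in>edges - Xs. e \<subseteq> {a,b,c}}) \<longleftrightarrow> even (X{a,b} + X{b,c} + X{c,a})" if f: "(a,b,c)\<in>F" for a b c
  proof -
    have E: "{a,b}\<in>edges" "{b,c}\<in>edges" "{c,a}\<in>edges" using face_edges_in[OF f] by auto
    have "card {e\<in>edges - Xs. e \<subseteq> {a,b,c}} =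
      (if {a,b}\<in>edges - Xs then 1 else 0) + (if {b,c}\<in>edges - Xs then 1 else 0) + (if {c,a}\<in>edges - Xs then 1 else 0)"
      by (rule card_edges_in_face[OF f]) auto
    moreover have "({a,b}\<in>edges - Xs) = even (X{a,b})" "({b,c}\<in>edges - Xs) = even (X{b,c})" "({c,a}\<in>edges - Xs) = even (X{c,a})"
      using E unfolding Xs_def by auto
    ultimately show ?thesis by (auto split: if_splits)
  qed
  define Q where "Q t = odd (card {e\<in>Xs. e \<subseteq> t})" for t
  have inv: "Q {a,b,apex a b} = Q {a,b,apex b a}" if E: "{a,b}\<in>edges" for a b
  proof -
    define c where "c = apex a b"
    define d where "d = apex b a"
    have f1: "(a,b,c)\<in>F" unfolding c_def by (rule apex_face[OF E])
    have f2: "(b,a,d)\<in>F" unfolding d_def by (rule apex_face[OF edge_commute[OF E]])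
    have q1: "Q {a,b,c} = odd (X{a,b} + X{b,c} + X{c,a})" unfolding Q_def using fc[OF f1] .
    have "{b,a,d} = {a,b,d}" by (rule insert_commute)
    hence q2: "Q {a,b,d} = odd (X{a,b} + X{a,d} + X{d,b})" unfolding Q_def using fc[OF f2] by (simp add: insert_commute)
    have "even (X{c,a} + X{d,b} - X{b,c} - X{a,d})" using dX[OF E] unfolding diamond_def c_def d_def .
    hence "Q {a,b,c} = Q {a,b,d}" unfolding q1 q2 by presburger
    thus ?thesis unfolding c_def d_def .
  qed
  obtain t0 where t0: "t0 \<in> faces" using faces_nonempty by blast
  have allQ: "Q t = Q t0" if t: "t\<in>faces" for t by (rule faces_invariant[where Q=Q, OF inv t t0])
  show ?thesis
  proof (cases "Q t0")
    case False
    hence "cobound1 Xs = {}" unfolding cobound1_def odd_incident_def using allQ unfolding Q_def by auto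
    thus ?thesis unfolding Xs_def by simp
  next
    case True
    have "even (card {e\<in>edges - Xs. e \<subseteq> t})" if t: "t\<in>faces" for t
    proof -
      obtain a b c where abc: "(a,b,c)\<in>F" "t = {a,b,c}" using facesE[OF t] by blast
      have "Q t" using allQ[OF t] True by simp
      hence "odd (X{a,b} + X{b,c} + X{c,a})" using fc[OF abc(1)] abc(2) unfolding Q_def by simp
      thus ?thesis using fc2[OF abc(1)] abc(2) by simp
    qed
    hence "cobound1 (edges - Xs) = {}" unfolding cobound1_def odd_incident_def by auto
    thus ?thesis unfolding Xs_def by simp
  qed
qed

end

section \<open>The matrix E restricted to the complement of a cycle-rooted spanning tree\<close>

locale tree_complement = sphere_triangulation +
  fixes E0 :: "'a set set" and vs :: "'a list"
  assumes E0_subset: "E0 \<subseteq> edges"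
    and card_tree: "card (edges - E0) = card V"
    and tree_connected: "spanning_connected V (edges - E0)"
    and tree_cycle: "is_cycle (edges - E0) vs" and odd_cycle: "odd (length vs)"
begin

abbreviation tree :: "'a set set" where
  "tree \<equiv> edges - E0"

lemma tree_edges: "e \<in> tree \<Longrightarrow> \<exists>a b. a \<noteq> b \<and> a \<in> V \<and> b \<in> V \<and> e = {a, b}"
  using edge_doubleton by blast

lemma finite_tree: "finite tree"
  using finite_edges by simp

lemma cycle_start_in_V: "vs ! 0 \<in> V"
  using cycle_vertex_in_V[OF tree_cycle tree_edges] .

lemma sum_star_tree_Emult:
  "(\<Sum>e \<in> {e \<in> tree. v \<in> e}. Emult X e) = - (\<Sum>e \<in> {e \<in> E0. v \<in> e}. Emult X e)"
proof -
  have star: "{e \<in> edges. v \<in> e} = {e \<in> tree. v \<in> e} \<union> {e \<in> E0. v \<in> e}"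
    using E0_subset by auto
  have "(\<Sum>e \<in> {e \<in> edges. v \<in> e}. Emult X e)
      = (\<Sum>e \<in> {e \<in> tree. v \<in> e}. Emult X e) + (\<Sum>e \<in> {e \<in> E0. v \<in> e}. Emult X e)"
    unfolding star
    by (rule sum.union_disjoint) (use finite_tree finite_subset[OF E0_subset finite_edges] in auto)
  then show ?thesis
    using sum_star_Emult[of X v] by linarith
qed

lemma kernel_mod_odd_prime:
  fixes X :: "'a set \<Rightarrow> int" and p :: int
  assumes p: "prime p" "p \<noteq> 2"
    and X_tree: "\<And>e. e \<in> tree \<Longrightarrow> X e = 0" and EX: "\<And>e. e \<in> E0 \<Longrightarrow> p dvd Emult X e"
    and "e \<in> E0"
  shows "p dvd X e"
proof -
  have "p dvd Emult X e" if "e \<in> tree" for e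
  proof (rule edge_weights_zero_mod_if_vertex_sums_zero[OF p finite_V finite_tree card_tree
        tree_edges tree_connected tree_cycle odd_cycle _ that])
    fix v assume "v \<in> V"
    have "p dvd (\<Sum>e \<in> {e \<in> E0. v \<in> e}. Emult X e)"
      using EX by (intro dvd_sum) simp
    then show "p dvd (\<Sum>e \<in> {e \<in> tree. v \<in> e}. Emult X e)"
      using sum_star_tree_Emult[of X v] by simp
  qed
  with EX have "\<forall>e \<in> edges. p dvd Emult X e"
    by blast
  then obtain \<psi> where \<psi>: "\<And>a b. {a, b} \<in> edges \<Longrightarrow> p dvd 2 * X {a, b} - \<psi> a - \<psi> b"
    using potential_mod by blast
  have "p dvd \<psi> a + \<psi> b" if "{a, b} \<in> tree" for a b
  proof -
    have "p dvd 2 * X {a, b} - \<psi> a - \<psi> b"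
      using \<psi> that by simp
    then have "p dvd - (\<psi> a + \<psi> b)"
      using X_tree[OF that] by simp
    then show ?thesis
      by (simp only: dvd_minus_iff)
  qed
  then have \<psi>0: "p dvd \<psi> v" if "v \<in> V" for v
    using vertex_weights_zero_mod_if_edge_sums_zero[OF p _ tree_connected tree_cycle odd_cycle
        cycle_start_in_V that] by blast
  obtain a b where ab: "a \<in> V" "b \<in> V" "e = {a, b}"
    using edge_doubleton \<open>e \<in> E0\<close> E0_subset by blast
  then have "p dvd 2 * X {a, b} - \<psi> a - \<psi> b"
    using \<psi> \<open>e \<in> E0\<close> E0_subset by blast
  then have "p dvd (2 * X {a, b} - \<psi> a - \<psi> b) + \<psi> a + \<psi> b"
    using \<psi>0 ab by (intro dvd_add)
  then have "p dvd 2 * X e"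
    using ab by simp
  moreover have "\<not> p dvd 2"
    using p prime_ge_2_int[of p] zdvd_imp_le[of p 2] by fastforce
  ultimately show ?thesis
    using p by (simp add: prime_dvd_mult_iff)
qed

lemma Emult_even:
  fixes X :: "'a set \<Rightarrow> int"
  assumes EX: "\<And>e. e \<in> E0 \<Longrightarrow> even (Emult X e)" and "e \<in> edges"
  shows "even (Emult X e)"
proof -
  define Ys where "Ys = {e \<in> tree. odd (Emult X e)}"
  have odd_edges: "{e \<in> edges. odd (Emult X e)} = Ys"
    unfolding Ys_def using EX by auto
  have "even (card {e \<in> Ys. v \<in> e})" if "v \<in> V" for v
  proof -
    have "even (\<Sum>e \<in> {e \<in> edges. v \<in> e}. Emult X e)"
      using sum_star_Emult by simp
    moreover have "finite {e \<in> edges. v \<in> e}"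
      using finite_edges by simp
    ultimately have "even (card {e \<in> {e \<in> edges. v \<in> e}. odd (Emult X e)})"
      using even_sum_iff[where f = "Emult X"] by blast
    moreover have "{e \<in> {e \<in> edges. v \<in> e}. odd (Emult X e)} = {e \<in> Ys. v \<in> e}"
      using odd_edges by auto
    ultimately show ?thesis
      by simp
  qed
  then have "Ys = {} \<or> Ys = cycle_edges vs"
    by (intro even_subgraph_eq_empty_or_cycle[OF finite_V V_nonempty finite_tree card_tree
          tree_edges tree_connected tree_cycle]) (auto simp: Ys_def)
  moreover have "even (card Ys)"
    using sum_Emult[of X] even_sum_iff[OF finite_edges, of "Emult X"] odd_edges by simp
  moreover have "odd (card (cycle_edges vs))"
    using card_cycle_edges[of vs] tree_cycle odd_cycle unfolding is_cycle_def by simp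
  ultimately have "Ys = {}"
    by auto
  then show ?thesis
    using \<open>e \<in> edges\<close> odd_edges by blast
qed

text \<open>Modulo 2 the potential argument breaks down; instead the face sums of X all have the same
  parity, so X or its complement is a mod-2 cocycle and hence, the sphere being simply connected,
  a coboundary. A coboundary vanishing on the connected tree vanishes everywhere, while a
  coboundary equal to 1 on the tree would two-colour its odd cycle.\<close>

lemma kernel_mod_two:
  fixes X :: "'a set \<Rightarrow> int"
  assumes X_tree: "\<And>e. e \<in> tree \<Longrightarrow> X e = 0" and EX: "\<And>e. e \<in> E0 \<Longrightarrow> even (Emult X e)"
    and "e \<in> E0"
  shows "even (X e)"
proof -
  define Xs where "Xs = {e \<in> edges. odd (X e)}"
  have Xs_tree: "e \<notin> Xs" if "e \<in> tree" for e
    using X_tree[OF that] unfolding Xs_def by simp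
  have "even (diamond X a b)" if "{a, b} \<in> edges" for a b
    using Emult_even[OF EX that] Emult_edge[OF that] by simp
  then consider "cobound1 Xs = {}" | "cobound1 (edges - Xs) = {}"
    unfolding Xs_def using face_parity by blast
  then show ?thesis
  proof cases
    case 1
    then obtain U where U: "U \<subseteq> V" "Xs = cobound0 U"
      using cocycle_eq_cobound0[of Xs] unfolding Xs_def by auto
    have "a \<in> U \<longleftrightarrow> b \<in> U" if "{a, b} \<in> tree" for a b
      using Xs_tree[OF that] edge_in_cobound0_iff[of a b U] that U(2) by auto
    moreover obtain a b where ab: "a \<in> V" "b \<in> V" "e = {a, b}"
      using edge_doubleton \<open>e \<in> E0\<close> E0_subset by blast
    ultimately have "a \<in> U \<longleftrightarrow> b \<in> U"
      using spanning_connected_invariant[OF tree_connected, of "\<lambda>x. x \<in> U"] by blast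
    then have "e \<notin> Xs"
      using edge_in_cobound0_iff[of a b U] U(2) ab \<open>e \<in> E0\<close> E0_subset by auto
    then show ?thesis
      using \<open>e \<in> E0\<close> E0_subset unfolding Xs_def by auto
  next
    case 2
    then obtain U where U: "U \<subseteq> V" "edges - Xs = cobound0 U"
      using cocycle_eq_cobound0[of "edges - Xs"] by auto
    have "a \<in> U \<longleftrightarrow> b \<notin> U" if "{a, b} \<in> tree" for a b
      using Xs_tree[OF that] edge_in_cobound0_iff[of a b U] that U(2) by auto
    then show ?thesis
      using odd_cycle_not_two_colourable[OF tree_cycle odd_cycle] by blast
  qed
qed

lemma kernel_mod_prime:
  fixes X :: "'a set \<Rightarrow> int" and p :: int
  assumes "prime p"
    and "\<And>e. e \<in> tree \<Longrightarrow> X e = 0" and "\<And>e. e \<in> E0 \<Longrightarrow> p dvd Emult X e"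
    and "e \<in> E0"
  shows "p dvd X e"
  using assms kernel_mod_odd_prime[of p X e] kernel_mod_two[of X e] by (cases "p = 2") auto

lemma kernel_trivial_mod_E0:
  assumes f: "bij_betw f {..<n} E0" and p: "prime p"
  shows "kernel_trivial_mod p n (\<lambda>i j. Eentry F (f i) (f j))"
  unfolding kernel_trivial_mod_def
proof (intro allI impI)
  fix x :: "nat \<Rightarrow> int" and j
  assume Ex: "\<forall>i<n. p dvd (\<Sum>j<n. Eentry F (f i) (f j) * x j)" and "j < n"
  define X where "X e = (if e \<in> E0 then x (inv_into {..<n} f e) else 0)" for e
  have f_E0: "f i \<in> E0" and X_f: "X (f i) = x i" if "i < n" for i
    using f that unfolding X_def bij_betw_def by (auto simp: inv_into_f_f)
  have "Emult X (f i) = (\<Sum>j<n. Eentry F (f i) (f j) * x j)" for i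
  proof -
    have "Emult X (f i) = (\<Sum>e \<in> E0. Eentry F (f i) e * X e)"
      unfolding Emult_def using E0_subset by (intro sum.mono_neutral_right finite_edges) (auto simp: X_def)
    also have "\<dots> = (\<Sum>j<n. Eentry F (f i) (f j) * X (f j))"
      by (rule sum.reindex_bij_betw[OF f, symmetric])
    finally show ?thesis
      by (simp add: X_f)
  qed
  then have "p dvd Emult X e" if "e \<in> E0" for e
    using Ex f that unfolding bij_betw_def by auto
  then have "p dvd X (f j)"
    using kernel_mod_prime[OF p, of X] f_E0[OF \<open>j < n\<close>] unfolding X_def by auto
  then show "p dvd x j"
    using X_f[OF \<open>j < n\<close>] by simp
qed

end

theorem lemma2:
  fixes V :: "'a set" and F :: "('a \<times> 'a \<times> 'a) set" and E0 :: "'a set set" and N :: nat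
  assumes "oriented_sphere_triangulation V F"
    and "card V = N + 3"
    and "card (tri_edges F) = 3 * N + 3"
    and "E0 \<subseteq> tri_edges F"
    and "card E0 = 2 * N"
    and "cycle_rooted_spanning_tree V (tri_edges F) (tri_edges F - E0)"
    and "\<exists>vs. is_cycle (tri_edges F - E0) vs \<and> odd (length vs)"
  shows "\<forall>f. bij_betw f {..<2 * N} E0 \<longrightarrow>
           det (mat (2 * N) (2 * N) (\<lambda>(i, j). Eentry F (f i) (f j))) = 1"
proof (intro allI impI)
  fix f assume f: "bij_betw f {..<2 * N} E0"
  obtain vs where "is_cycle (tri_edges F - E0) vs" "odd (length vs)"
    using assms(7) by blast
  then interpret tree_complement V F E0 vs
    using assms(1,4,6) unfolding cycle_rooted_spanning_tree_def
    by unfold_locales (auto simp: sphere_triangulation_def)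
  let ?M = "mat (2 * N) (2 * N) (\<lambda>(i, j). Eentry F (f i) (f j))"
  have "det ?M \<ge> 0"
    using f E0_subset Eentry_skew unfolding bij_betw_def
    by (intro det_skew_symmetric_nonneg) blast
  moreover have "det ?M = 1 \<or> det ?M = -1"
    using not_dvd_det_if_kernel_trivial_mod[OF _ kernel_trivial_mod_E0[OF f]]
    by (intro int_unit_if_no_prime_divisor) blast
  ultimately show "det ?M = 1"
    by linarith
qed

end
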